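(* (a) Suppose that for every $y_0\in Y$ the limit $V(y_0):=\lim_{T\to\infty}V_T(y_0)$ exists, and that the function $V(\cdot)$ is continuous on $Y$. Then $V(y_0)=d^*(y_0)$ for all $y_0\in Y$. (b) Suppose that for every $y_0\in Y$ the limit $h(y_0):=\lim_{\alpha\to1}h_\alpha(y_0)$ exists, and that $h(\cdot)$ is continuous on $Y$. Then $h(y_0)=d^*(y_0)$ for all $y_0\in Y$.
   Context: Let $Y\subset\mathbb{R}^m$ be nonempty compact, $U_0$ a compact metric space, $U(\cdot):Y\rightsquigarrow U_0$ upper semicontinuous and compact-valued, and $f:\mathbb{R}^m\times U_0\to\mathbb{R}^m$, $k:\mathbb{R}^m\times U_0\to\mathbb{R}$ continuous. Put $A(y):=\{u\in U(y): f(y,u)\in Y\}$ and $G:=\{(y,u):y\in Y,\ u\in A(y)\}$. Standing assumption: $A(y)\ne\emptyset$ for all $y\in Y$. For $y_0\in Y$, an admissible process on $\{0,\dots,T-1\}$ (respectively on $\{0,1,\dots\}$) is a pair $(y(t),u(t))$ with $y(0)=y_0$, $u(t)\in A(y(t))$ and $y(t+1)=f(y(t),u(t))$. The controls form $\mathcal U_T(y_0)$ (respectively $\mathcal U(y_0)$). Value functions: $$V_T(y_0):=\frac1T\min_{u\in\mathcal U_T(y_0)}\sum_{t=0}^{T-1}k(y(t),u(t)),\qquad h_\alpha(y_0):=(1-\alpha)\min_{u\in\mathcal U(y_0)}\sum_{t=0}^\infty\alpha^tk(y(t),u(t)).$$ Dual value: $d^*(y_0):=\sup\mu$, where the supremum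 is over triples $(\mu,\psi,\eta)\in\mathbb{R}\times C(Y)\times C(Y)$ with, for all $(y,u)\in G$: $$k(y,u)+\psi(y_0)-\psi(y)+\eta(f(y,u))-\eta(y)-\mu\ge0,\qquad\psi(f(y,u))-\psi(y)\ge0.$$ *)

theory Defs
  imports "HOL-Analysis.Analysis"
begin

definition usc_on :: "'a::metric_space set \<Rightarrow> ('a \<Rightarrow> 'u::topological_space set) \<Rightarrow> bool" where
  "usc_on Y U \<longleftrightarrow> (\<forall>y\<in>Y. \<forall>W. open W \<and> U y \<subseteq> W \<longrightarrow>
      (\<exists>\<delta>>0. \<forall>y'\<in>Y. dist y' y < \<delta> \<longrightarrow> U y' \<subseteq> W))"

definition adm :: "'a set \<Rightarrow> ('a \<Rightarrow> 'u set) \<Rightarrow> ('a \<Rightarrow> 'u \<Rightarrow> 'a) \<Rightarrow> 'a \<Rightarrow> 'u set" where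
  "adm Y U f y = {u \<in> U y. f y u \<in> Y}"

definition graphG :: "'a set \<Rightarrow> ('a \<Rightarrow> 'u set) \<Rightarrow> ('a \<Rightarrow> 'u \<Rightarrow> 'a) \<Rightarrow> ('a \<times> 'u) set" where
  "graphG Y U f = {(y, u). y \<in> Y \<and> u \<in> adm Y U f y}"

fun traj :: "('a \<Rightarrow> 'u \<Rightarrow> 'a) \<Rightarrow> 'a \<Rightarrow> (nat \<Rightarrow> 'u) \<Rightarrow> nat \<Rightarrow> 'a" where
  "traj f y0 u 0 = y0"
| "traj f y0 u (Suc t) = f (traj f y0 u t) (u t)"

definition UT :: "'a set \<Rightarrow> ('a \<Rightarrow> 'u set) \<Rightarrow> ('a \<Rightarrow> 'u \<Rightarrow> 'a) \<Rightarrow> nat \<Rightarrow> 'a \<Rightarrow> (nat \<Rightarrow> 'u) set" where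
  "UT Y U f T y0 = {u. \<forall>t<T. u t \<in> adm Y U f (traj f y0 u t)}"

definition Uinf :: "'a set \<Rightarrow> ('a \<Rightarrow> 'u set) \<Rightarrow> ('a \<Rightarrow> 'u \<Rightarrow> 'a) \<Rightarrow> 'a \<Rightarrow> (nat \<Rightarrow> 'u) set" where
  "Uinf Y U f y0 = {u. \<forall>t. u t \<in> adm Y U f (traj f y0 u t)}"

text \<open>Finite-horizon average value V_T (the minimum is rendered as an infimum; it is attained).\<close>
definition VT :: "'a set \<Rightarrow> ('a \<Rightarrow> 'u set) \<Rightarrow> ('a \<Rightarrow> 'u \<Rightarrow> 'a) \<Rightarrow> ('a \<Rightarrow> 'u \<Rightarrow> real)
     \<Rightarrow> nat \<Rightarrow> 'a \<Rightarrow> real" where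
  "VT Y U f k T y0 = (1 / real T) *
     (INF u \<in> UT Y U f T y0. (\<Sum>t<T. k (traj f y0 u t) (u t)))"

text \<open>Discounted value h_alpha (the minimum is rendered as an infimum; it is attained).\<close>
definition h_disc :: "'a set \<Rightarrow> ('a \<Rightarrow> 'u set) \<Rightarrow> ('a \<Rightarrow> 'u \<Rightarrow> 'a) \<Rightarrow> ('a \<Rightarrow> 'u \<Rightarrow> real)
     \<Rightarrow> real \<Rightarrow> 'a \<Rightarrow> real" where
  "h_disc Y U f k \<alpha> y0 = (1 - \<alpha>) *
     (INF u \<in> Uinf Y U f y0. (\<Sum>t. \<alpha> ^ t * k (traj f y0 u t) (u t)))"

definition dstar :: "'a::topological_space set \<Rightarrow> ('a \<Rightarrow> 'u set) \<Rightarrow> ('a \<Rightarrow> 'u \<Rightarrow> 'a) \<Rightarrow> ('a \<Rightarrow> 'u \<Rightarrow> real)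
     \<Rightarrow> 'a \<Rightarrow> real" where
  "dstar Y U f k y0 = Sup {\<mu>. \<exists>\<psi> \<eta>. continuous_on Y \<psi> \<and> continuous_on Y \<eta> \<and>
      (\<forall>(y, u) \<in> graphG Y U f.
          k y u + \<psi> y0 - \<psi> y + \<eta> (f y u) - \<eta> y - \<mu> \<ge> 0 \<and> \<psi> (f y u) - \<psi> y \<ge> 0)}"

end

theory Submission
  imports Defs "HOL-Library.Diagonal_Subsequence"
begin

text \<open>Weak duality: along an admissible trajectory \<open>\<psi>\<close> does not decrease, so the first constraint
  telescopes and bounds \<open>\<mu>\<close> by finite-horizon (or discounted) average costs, hence by \<open>V y0\<close>
  (or \<open>h y0\<close>). Conversely, let \<open>F\<close> be \<open>V\<close> or \<open>h\<close>. Then \<open>F\<close> is nondecreasing along transitions,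
  and from every \<open>z\<close> some horizon \<open>N\<close> has all \<open>N\<close>-step average costs at least \<open>F z - e\<close>; for \<open>h\<close>
  this comes from cutting a bad trajectory where its partial sums are maximal, passing to a limit
  trajectory by compactness, and Abel summation. Compactness of the graph \<open>G\<close> makes this bound
  uniform in \<open>z\<close> and robust under small jumps, so chains that may jump, paying for each jump in
  proportion to its length, have costs bounded below. Their least cost from a point is a Lipschitz
  \<open>\<eta>\<close> which, with \<open>\<psi> = - M max (F y0 - F) 0\<close>, gives a feasible triple with \<open>\<mu> = F y0 - e\<close>.\<close>

lemma compact_diagonal_subseq:
  fixes s :: "nat \<Rightarrow> nat \<Rightarrow> 'b::metric_space"
  assumes K: "compact K" and sK: "\<And>j t. s j t \<in> K"
  obtains r q where "strict_mono r" "\<And>t. (\<lambda>j. s (r j) t) \<longlonglongrightarrow> q t" "\<And>t. q t \<in> K"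
proof -
  interpret subseqs "\<lambda>t r. \<exists>l. (\<lambda>j. s (r j) t) \<longlonglongrightarrow> l"
  proof
    fix t and r :: "nat \<Rightarrow> nat"
    obtain l r' where "strict_mono r'" "((\<lambda>j. s (r j) t) \<circ> r') \<longlonglongrightarrow> l"
      using compact_imp_seq_compact[OF K] sK unfolding seq_compact_def by metis
    then show "\<exists>r'. strict_mono r' \<and> (\<exists>l. (\<lambda>j. s ((r \<circ> r') j) t) \<longlonglongrightarrow> l)"
      by (auto simp: o_def)
  qed
  have "\<exists>l. (\<lambda>j. s (diagseq j) t) \<longlonglongrightarrow> l" for t
  proof -
    obtain l where "(\<lambda>j. s ((diagseq \<circ> (+) (Suc t)) j) t) \<longlonglongrightarrow> l"
    proof (atomize_elim, rule diagseq_holds)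
      fix r s' t
      assume "strict_mono (r :: nat \<Rightarrow> nat)" "\<exists>l. (\<lambda>j. s (s' j) t) \<longlonglongrightarrow> l"
      then show "\<exists>l. (\<lambda>j. s ((s' \<circ> r) j) t) \<longlonglongrightarrow> l"
        using LIMSEQ_subseq_LIMSEQ[of "\<lambda>j. s (s' j) t"] by (auto simp: o_def)
    qed
    then have "(\<lambda>j. s (diagseq (j + Suc t)) t) \<longlonglongrightarrow> l" by (simp add: ac_simps)
    then show ?thesis using LIMSEQ_offset[of "\<lambda>j. s (diagseq j) t"] by blast
  qed
  then obtain q where q: "\<And>t. (\<lambda>j. s (diagseq j) t) \<longlonglongrightarrow> q t"
    using choice[of "\<lambda>t l. (\<lambda>j. s (diagseq j) t) \<longlonglongrightarrow> l"] by blast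
  have "q t \<in> K" for t
    using closed_sequentially[OF compact_imp_closed[OF K] _ q] sK by blast
  then show thesis by (rule that[OF subseq_diagseq q])
qed

lemma sum_lessThan_add:
  fixes h :: "nat \<Rightarrow> 'b::comm_monoid_add"
  shows "(\<Sum>t<m + n. h t) = (\<Sum>t<m. h t) + (\<Sum>t<n. h (m + t))"
  by (induction n) (simp_all add: add.assoc)

lemma closed_graph_if_usc_on:
  fixes U :: "'a::metric_space \<Rightarrow> 'u::metric_space set"
  assumes usc: "usc_on Y U" and "closed Y" and closedU: "\<And>y. y \<in> Y \<Longrightarrow> closed (U y)"
  shows "closed {(y, u). y \<in> Y \<and> u \<in> U y}"
  unfolding closed_sequential_limits
proof (intro allI impI, elim conjE)
  fix s :: "nat \<Rightarrow> 'a \<times> 'u" and l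
  assume s: "\<forall>n. s n \<in> {(y, u). y \<in> Y \<and> u \<in> U y}" and lim: "s \<longlonglongrightarrow> l"
  obtain y u where l: "l = (y, u)" by (cases l)
  have ly: "(\<lambda>n. fst (s n)) \<longlonglongrightarrow> y" and lu: "(\<lambda>n. snd (s n)) \<longlonglongrightarrow> u"
    using tendsto_fst[OF lim] tendsto_snd[OF lim] l by simp_all
  have sY: "fst (s n) \<in> Y" and sU: "snd (s n) \<in> U (fst (s n))" for n
    using s by (auto simp: case_prod_beta)
  have y: "y \<in> Y"
    using closed_sequentially[OF \<open>closed Y\<close> _ ly] sY by blast
  have "u \<in> U y"
  proof (rule ccontr)
    assume "u \<notin> U y"
    then obtain e where e: "e > 0" "ball u e \<subseteq> - U y"
      using closedU[OF y] by (metis ComplI open_Compl open_contains_ball)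
    have "open (- cball u (e/2))" "U y \<subseteq> - cball u (e/2)"
      using e by (auto simp: subset_eq)
    then obtain d where d: "d > 0" "\<forall>y'\<in>Y. dist y' y < d \<longrightarrow> U y' \<subseteq> - cball u (e/2)"
      using usc y unfolding usc_on_def by blast
    have "\<forall>\<^sub>F n in sequentially. dist (fst (s n)) y < d \<and> dist (snd (s n)) u < e/2"
      using tendstoD[OF ly d(1)] tendstoD[OF lu, of "e/2"] e(1) by (auto intro: eventually_conj)
    then obtain n where n: "dist (fst (s n)) y < d" "dist (snd (s n)) u < e/2"
      using eventually_sequentially by auto
    then have "snd (s n) \<in> - cball u (e/2)"
      using d(2) sY sU by blast
    with n(2) show False by (simp add: dist_commute)
  qed
  with y l show "l \<in> {(y, u). y \<in> Y \<and> u \<in> U y}" by simp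
qed

lemma cSup_eq_if_approximated:
  fixes D :: "real set"
  assumes "\<And>x. x \<in> D \<Longrightarrow> x \<le> a" and "\<And>e. e > 0 \<Longrightarrow> a - e \<in> D"
  shows "Sup D = a"
proof (rule cSup_eq_non_empty)
  show "D \<noteq> {}" using assms(2)[of 1] by auto
  show "a \<le> b" if "\<And>x. x \<in> D \<Longrightarrow> x \<le> b" for b
  proof (rule ccontr)
    assume "\<not> a \<le> b"
    then have "a - (a - b) / 2 \<in> D" by (intro assms(2)) simp
    then have "a - (a - b) / 2 \<le> b" by (rule that)
    with \<open>\<not> a \<le> b\<close> show False by (simp add: field_simps)
  qed
qed (use assms(1) in blast)

lemma summable_discounted:
  fixes a :: "nat \<Rightarrow> real"
  assumes "\<And>t. \<bar>a t\<bar> \<le> B" and "0 \<le> \<alpha>" and "\<alpha> < 1"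
  shows "summable (\<lambda>t. \<alpha>^t * a t)"
proof (rule summable_comparison_test')
  show "summable (\<lambda>t. B * \<alpha>^t)" using assms(2,3) by (intro summable_mult summable_geometric) simp
  show "norm (\<alpha>^t * a t) \<le> B * \<alpha>^t" for t
    using mult_right_mono[OF assms(1)[of t], of "\<alpha>^t"] assms(2) by (simp add: abs_mult mult.commute)
qed

lemma abs_suminf_discounted_le:
  fixes a :: "nat \<Rightarrow> real"
  assumes B: "\<And>t. \<bar>a t\<bar> \<le> B" and "0 \<le> \<alpha>" and "\<alpha> < 1"
  shows "\<bar>\<Sum>t. \<alpha>^t * a t\<bar> \<le> B / (1 - \<alpha>)"
proof -
  have s_abs: "summable (\<lambda>t. \<bar>\<alpha>^t * a t\<bar>)"
    using summable_discounted[of "\<lambda>t. \<bar>a t\<bar>" B] assms by (simp add: abs_mult)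
  have s_B: "summable (\<lambda>t. \<alpha>^t * B)"
    using summable_discounted[of "\<lambda>_. B" "\<bar>B\<bar>"] assms(2,3) by simp
  have "\<bar>\<Sum>t. \<alpha>^t * a t\<bar> \<le> (\<Sum>t. \<bar>\<alpha>^t * a t\<bar>)"
    by (rule summable_rabs[OF s_abs])
  also have "\<dots> \<le> (\<Sum>t. \<alpha>^t * B)"
    using B assms(2) by (intro suminf_le[OF _ s_abs s_B]) (simp add: abs_mult mult_left_mono)
  also have "\<dots> = B / (1 - \<alpha>)"
    using assms by (simp add: mult.commute[of _ B] suminf_mult suminf_geometric)
  finally show ?thesis .
qed

lemma discounted_telescoping_lower_bound:
  fixes b :: "nat \<Rightarrow> real"
  assumes B: "\<And>t. \<bar>b t\<bar> \<le> B" and "0 \<le> \<alpha>" and "\<alpha> < 1"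
  shows "- 2 * B \<le> (\<Sum>t. \<alpha>^t * (b t - b (Suc t)))"
proof -
  have s0: "summable (\<lambda>t. \<alpha>^t * b t)" and s1: "summable (\<lambda>t. \<alpha>^t * b (Suc t))"
    using summable_discounted[OF B] summable_discounted[OF B[of "Suc _"]] assms(2,3) by auto
  define S where "S = (\<Sum>t. \<alpha>^t * b (Suc t))"
  have "(\<Sum>t. \<alpha>^t * b t) = b 0 + \<alpha> * S"
    using suminf_split_head[OF s0] suminf_mult[OF s1, of \<alpha>] by (simp add: S_def mult.assoc)
  then have "(\<Sum>t. \<alpha>^t * (b t - b (Suc t))) = b 0 - (1 - \<alpha>) * S"
    using suminf_diff[OF s0 s1] by (simp add: S_def right_diff_distrib algebra_simps)
  moreover have "(1 - \<alpha>) * S \<le> B"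
    using abs_suminf_discounted_le[OF B[of "Suc _"] assms(2,3)] assms(3)
    by (simp add: S_def abs_le_iff pos_le_divide_eq mult.commute)
  ultimately show ?thesis using B[of 0] by (simp add: abs_le_iff)
qed

lemma sum_discounted_nonpos:
  fixes a :: "nat \<Rightarrow> real"
  assumes "0 \<le> \<alpha>" and "\<alpha> \<le> 1" and prefix: "\<And>m. (\<Sum>t<m. a t) \<le> 0"
  shows "(\<Sum>t<n. \<alpha>^t * a t) \<le> 0"
proof -
  have Abel: "(\<Sum>t<n. \<alpha>^t * a t)
      = \<alpha>^n * (\<Sum>t<n. a t) + (\<Sum>t<n. (\<alpha>^t - \<alpha>^Suc t) * (\<Sum>i<Suc t. a i))"
    by (induction n) (simp_all add: algebra_simps)
  have "(\<alpha>^t - \<alpha>^Suc t) * (\<Sum>i<Suc t. a i) \<le> 0" for t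
    using power_decreasing[of t "Suc t" \<alpha>] prefix[of "Suc t"] assms
    by (intro mult_nonneg_nonpos) (simp_all del: sum.lessThan_Suc)
  then have "(\<Sum>t<n. (\<alpha>^t - \<alpha>^Suc t) * (\<Sum>i<Suc t. a i)) \<le> 0"
    by (intro sum_nonpos)
  moreover have "\<alpha>^n * (\<Sum>t<n. a t) \<le> 0"
    using assms prefix by (simp add: mult_nonneg_nonpos)
  ultimately show ?thesis unfolding Abel by linarith
qed

text \<open>The start \<open>s\<close> is a maximiser of the partial sums; since the total is very negative and the
  terms are bounded, the remaining horizon \<open>N - s\<close> is long.\<close>
lemma exists_start_of_nonpos_partial_sums:
  fixes a :: "nat \<Rightarrow> real"
  assumes "0 < N" and bound: "\<And>t. t < N \<Longrightarrow> \<bar>a t\<bar> \<le> K"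
    and total: "(\<Sum>t<N. a t) \<le> - (real N * c)" and "c > 0"
  shows "\<exists>s<N. real N * c \<le> real (N - s) * K \<and> (\<forall>m. s + m \<le> N \<longrightarrow> (\<Sum>t<m. a (s + t)) \<le> 0)"
proof -
  define P where "P m = (\<Sum>t<m. a t)" for m
  have "Max (P ` {..N}) \<in> P ` {..N}" by (intro Max_in) auto
  then obtain s where s: "s \<le> N" "P s = Max (P ` {..N})" by (metis atMost_iff imageE)
  then have smax: "m \<le> N \<Longrightarrow> P m \<le> P s" for m by simp
  have split: "P (s + m) = P s + (\<Sum>t<m. a (s + t))" for m
    unfolding P_def by (rule sum_lessThan_add)
  have "0 \<le> P s" using smax[of 0] by (simp add: P_def)
  moreover have "0 < real N * c" using assms(1,4) by simp
  then have "P N < 0" using total by (simp add: P_def)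
  ultimately have "s < N" using s(1) by (cases "s = N") auto
  have "(\<Sum>t<N - s. - K) \<le> (\<Sum>t<N - s. a (s + t))"
  proof (intro sum_mono)
    fix t assume "t \<in> {..<N - s}"
    then have "s + t < N" by auto
    then show "- K \<le> a (s + t)" using bound[of "s + t"] by (simp add: abs_le_iff)
  qed
  then have "- (real (N - s) * K) \<le> (\<Sum>t<N - s. a (s + t))" by simp
  moreover have "P N = P s + (\<Sum>t<N - s. a (s + t))" using split[of "N - s"] \<open>s < N\<close> by simp
  ultimately have "real N * c \<le> real (N - s) * K" using total \<open>0 \<le> P s\<close> unfolding P_def by linarith
  moreover have "\<forall>m. s + m \<le> N \<longrightarrow> (\<Sum>t<m. a (s + t)) \<le> 0"
    using smax split by (metis add_le_same_cancel1)
  ultimately show ?thesis using \<open>s < N\<close> by blast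
qed

lemma traj_shift: "traj f y u (s + t) = traj f (traj f y u s) (\<lambda>t. u (s + t)) t"
  by (induction t) auto

lemma traj_case_nat_Suc: "traj f y (case_nat a w) (Suc t) = traj f (f y a) w t"
  by (induction t) auto

lemma traj_eqI:
  assumes "\<And>t. Suc t < N \<Longrightarrow> x (Suc t) = f (x t) (v t)" and "t < N"
  shows "traj f (x 0) v t = x t"
  using assms(2) by (induction t) (simp_all add: assms(1))

definition chain_cost :: "('a::metric_space \<Rightarrow> 'u \<Rightarrow> 'a) \<Rightarrow> ('a \<Rightarrow> 'u \<Rightarrow> real) \<Rightarrow> real \<Rightarrow> nat \<Rightarrow>
    (nat \<Rightarrow> 'a) \<Rightarrow> (nat \<Rightarrow> 'u) \<Rightarrow> real" where
  "chain_cost f g L n x v =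
     (\<Sum>t<n. g (x t) (v t)) + L * (\<Sum>t<n - 1. dist (x (Suc t)) (f (x t) (v t)))"

lemma sum_le_chain_cost: "L \<ge> 0 \<Longrightarrow> (\<Sum>t<n. g (x t) (v t)) \<le> chain_cost f g L n x v"
  unfolding chain_cost_def by (simp add: sum_nonneg)

lemma chain_cost_split:
  assumes "0 < m" and "m < n"
  shows "chain_cost f g L n x v = chain_cost f g L m x v + L * dist (x m) (f (x (m - 1)) (v (m - 1)))
           + chain_cost f g L (n - m) (\<lambda>t. x (m + t)) (\<lambda>t. v (m + t))"
proof -
  obtain m' where m: "m = Suc m'" using gr0_implies_Suc[OF assms(1)] by blast
  obtain j where n: "n = m + Suc j" using less_imp_Suc_add[OF assms(2)] by auto
  define D where "D t = dist (x (Suc t)) (f (x t) (v t))" for t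
  have "(\<Sum>t<n. g (x t) (v t)) = (\<Sum>t<m. g (x t) (v t)) + (\<Sum>t<n - m. g (x (m + t)) (v (m + t)))"
    unfolding n by (simp add: sum_lessThan_add)
  moreover have "(\<Sum>t<n - 1. D t) = (\<Sum>t<m'. D t) + D m' + (\<Sum>t<j. D (m + t))"
  proof -
    have "n - 1 = m' + Suc j" using m n by simp
    then have "(\<Sum>t<n - 1. D t) = (\<Sum>t<m'. D t) + (\<Sum>t<Suc j. D (m' + t))"
      by (simp only: sum_lessThan_add)
    also have "(\<Sum>t<Suc j. D (m' + t)) = D m' + (\<Sum>t<j. D (m + t))"
      by (simp only: sum.lessThan_Suc_shift) (simp add: m)
    finally show ?thesis by simp
  qed
  ultimately show ?thesis
    by (simp add: chain_cost_def D_def m n algebra_simps)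
qed

lemma chain_cost_cons_le:
  assumes "L \<ge> 0"
  shows "chain_cost f g L (Suc n) (case_nat y x) (case_nat u w)
           \<le> g y u + L * dist (f y u) (x 0) + chain_cost f g L n x w"
proof (cases "n = 0")
  case True
  then show ?thesis using assms by (simp add: chain_cost_def)
next
  case False
  then show ?thesis
    using chain_cost_split[of 1 "Suc n" f g L "case_nat y x" "case_nat u w"]
    by (simp add: chain_cost_def dist_commute)
qed

lemma lipschitz_on_INF_dist:
  fixes a :: "'c \<Rightarrow> 'a::metric_space" and b :: "'c \<Rightarrow> real"
  assumes "C \<noteq> {}" and "L \<ge> 0" and lower: "\<And>c. c \<in> C \<Longrightarrow> B \<le> b c"
  shows "L-lipschitz_on S (\<lambda>y. INF c\<in>C. L * dist y (a c) + b c)"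
proof -
  define \<eta> where "\<eta> y = (INF c\<in>C. L * dist y (a c) + b c)" for y
  have \<eta>_lip: "\<eta> y \<le> \<eta> y' + L * dist y y'" for y y'
  proof -
    have "\<eta> y - L * dist y y' \<le> L * dist y' (a c) + b c" if "c \<in> C" for c
    proof -
      have "bdd_below ((\<lambda>c. L * dist y (a c) + b c) ` C)"
        using lower \<open>L \<ge> 0\<close> by (intro bdd_belowI2[of _ B]) (simp add: add_increasing)
      then have "\<eta> y \<le> L * dist y (a c) + b c"
        unfolding \<eta>_def using that by (rule cINF_lower)
      moreover have "L * dist y (a c) \<le> L * dist y y' + L * dist y' (a c)"
        using mult_left_mono[OF dist_triangle[of y "a c" y'] \<open>L \<ge> 0\<close>] by (simp add: distrib_left)
      ultimately show ?thesis by simp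
    qed
    then have "\<eta> y - L * dist y y' \<le> \<eta> y'"
      unfolding \<eta>_def[of y'] by (intro cINF_greatest[OF \<open>C \<noteq> {}\<close>])
    then show ?thesis by simp
  qed
  show ?thesis
    unfolding \<eta>_def[symmetric]
  proof (rule lipschitz_onI)
    show "dist (\<eta> y) (\<eta> y') \<le> L * dist y y'" for y y'
      using \<eta>_lip[of y y'] \<eta>_lip[of y' y] by (simp add: dist_real_def dist_commute abs_le_iff)
  qed (rule \<open>L \<ge> 0\<close>)
qed

lemma penalty_compensates_deficit:
  fixes N Nmax :: nat
  assumes "N \<le> Nmax" "\<bar>a\<bar> \<le> B" "\<bar>b\<bar> \<le> B" "e > 0" "M * e = real Nmax * (2 * B)" "M \<ge> 0"
  shows "0 \<le> real N * (a - b + e) + M * max (b - a) 0"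
proof (cases "b - e \<le> a")
  case True
  then show ?thesis using assms(6) by simp
next
  case False
  have "- (2 * B) \<le> a - b + e" "0 \<le> B" using assms(2-4) by (simp_all add: abs_le_iff)
  then have "- (real N * (2 * B)) \<le> real N * (a - b + e)"
    using mult_left_mono[of "- (2 * B)" "a - b + e" "real N"] by simp
  moreover have "real N * (2 * B) \<le> real Nmax * (2 * B)"
    using assms(1) \<open>0 \<le> B\<close> by (intro mult_right_mono) simp_all
  moreover have "M * e \<le> M * max (b - a) 0"
    using False assms(6) by (intro mult_left_mono) auto
  ultimately show ?thesis using assms(5) by linarith
qed

lemma penalised_block_nonneg:
  fixes N Nmax :: nat
  assumes "0 < N" "N \<le> Nmax" and sum_k: "real N * (F (x 0) - 2 * e) \<le> (\<Sum>t<N. k (x t) (v t))"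
    and "\<bar>F (x 0)\<bar> \<le> B" "\<bar>F y0\<bar> \<le> B" "e > 0" "M * e = real Nmax * (2 * B)" "M \<ge> 0"
  shows "0 \<le> (\<Sum>t<N. k (x t) (v t) + M * max (F y0 - F (x t)) 0 - (F y0 - 3 * e))"
proof -
  have "M * max (F y0 - F (x 0)) 0 \<le> (\<Sum>t<N. M * max (F y0 - F (x t)) 0)"
    using \<open>0 < N\<close> \<open>M \<ge> 0\<close>
    by (cases N) (simp_all add: sum.lessThan_Suc_shift sum_nonneg del: sum.lessThan_Suc)
  moreover have "0 \<le> real N * (F (x 0) - F y0 + e) + M * max (F y0 - F (x 0)) 0"
    using penalty_compensates_deficit[OF assms(2,4-8)] .
  ultimately show ?thesis
    using sum_k by (simp add: sum.distrib sum_subtractf algebra_simps)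
qed

locale control_system =
  fixes Y :: "'a::metric_space set" and U0 :: "'u::metric_space set"
    and U :: "'a \<Rightarrow> 'u set" and f :: "'a \<Rightarrow> 'u \<Rightarrow> 'a" and k :: "'a \<Rightarrow> 'u \<Rightarrow> real"
  assumes Y_nonempty: "Y \<noteq> {}" and compact_Y: "compact Y" and compact_U0: "compact U0"
    and U_compact: "\<forall>y\<in>Y. U y \<subseteq> U0 \<and> compact (U y)"
    and usc_U: "usc_on Y U"
    and continuous_f: "continuous_on (UNIV \<times> U0) (\<lambda>(y, u). f y u)"
    and continuous_k: "continuous_on (UNIV \<times> U0) (\<lambda>(y, u). k y u)"
    and adm_nonempty: "\<forall>y\<in>Y. adm Y U f y \<noteq> {}"
begin

abbreviation G :: "('a \<times> 'u) set" where "G \<equiv> graphG Y U f"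

lemma mem_G: "(y, u) \<in> G \<longleftrightarrow> y \<in> Y \<and> u \<in> U y \<and> f y u \<in> Y"
  by (auto simp: graphG_def adm_def)

lemma G_subset: "G \<subseteq> Y \<times> U0"
  using U_compact by (force simp: mem_G)

lemma compact_G: "compact G"
proof -
  let ?graph = "{(y, u). y \<in> Y \<and> u \<in> U y}"
  have "closed ?graph"
    using usc_U compact_imp_closed[OF compact_Y] U_compact compact_imp_closed
    by (intro closed_graph_if_usc_on) auto
  moreover have "continuous_on ?graph (\<lambda>(y, u). f y u)"
    by (rule continuous_on_subset[OF continuous_f]) (use U_compact in auto)
  ultimately have "closed (?graph \<inter> (\<lambda>(y, u). f y u) -` Y)"
    using compact_imp_closed[OF compact_Y] by (intro continuous_closed_preimage)
  moreover have "G = (Y \<times> U0) \<inter> (?graph \<inter> (\<lambda>(y, u). f y u) -` Y)"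
    using G_subset by (auto simp: mem_G)
  ultimately show ?thesis
    using compact_Int_closed[OF compact_Times[OF compact_Y compact_U0]] by simp
qed

lemma continuous_on_G:
  "continuous_on G (\<lambda>p. f (fst p) (snd p))" "continuous_on G (\<lambda>p. k (fst p) (snd p))"
proof -
  have "G \<subseteq> UNIV \<times> U0" using G_subset by blast
  then show "continuous_on G (\<lambda>p. f (fst p) (snd p))" "continuous_on G (\<lambda>p. k (fst p) (snd p))"
    using continuous_on_subset[OF continuous_f] continuous_on_subset[OF continuous_k]
    unfolding case_prod_beta' by blast+
qed

lemma tendsto_f_k_G:
  assumes "s \<longlonglongrightarrow> p" "p \<in> G" "\<And>n. s n \<in> G"
  shows "(\<lambda>n. f (fst (s n)) (snd (s n))) \<longlonglongrightarrow> f (fst p) (snd p)"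
    and "(\<lambda>n. k (fst (s n)) (snd (s n))) \<longlonglongrightarrow> k (fst p) (snd p)"
  using continuous_on_tendsto_compose[OF continuous_on_G(1) assms(1,2)]
    continuous_on_tendsto_compose[OF continuous_on_G(2) assms(1,2)] assms(3) by simp_all

lemma k_bounded:
  obtains K where "K \<ge> 0" "\<And>y u. (y, u) \<in> G \<Longrightarrow> \<bar>k y u\<bar> \<le> K"
proof -
  obtain K where "K \<ge> 0" and K: "\<And>p. p \<in> G \<Longrightarrow> norm (k (fst p) (snd p)) \<le> K"
    using continuous_on_compact_bound[OF compact_G continuous_on_G(2)] by blast
  have "\<bar>k y u\<bar> \<le> K" if "(y, u) \<in> G" for y u
    using K[OF that] by simp
  with \<open>K \<ge> 0\<close> show thesis by (rule that)
qed

lemma UT_iff: "y \<in> Y \<Longrightarrow> u \<in> UT Y U f N y \<longleftrightarrow> (\<forall>t<N. (traj f y u t, u t) \<in> G)"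
proof -
  assume y: "y \<in> Y"
  have "traj f y u t \<in> Y" if "\<forall>t<N. u t \<in> adm Y U f (traj f y u t)" "t \<le> N" for t
    using that(2) by (induction t) (use y that(1) in \<open>auto simp: adm_def\<close>)
  then show ?thesis by (auto simp: UT_def graphG_def)
qed

lemma Uinf_iff_UT: "u \<in> Uinf Y U f y \<longleftrightarrow> (\<forall>N. u \<in> UT Y U f N y)"
  by (auto simp: Uinf_def UT_def)

lemma Uinf_iff: "y \<in> Y \<Longrightarrow> u \<in> Uinf Y U f y \<longleftrightarrow> (\<forall>t. (traj f y u t, u t) \<in> G)"
  unfolding Uinf_iff_UT using UT_iff by (meson lessI less_trans)

lemma UT_shift:
  "u \<in> UT Y U f N y \<Longrightarrow> s + m \<le> N \<Longrightarrow> (\<lambda>t. u (s + t)) \<in> UT Y U f m (traj f y u s)"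
  by (auto simp: UT_def traj_shift[symmetric])

lemma UT_case_nat:
  assumes "(y, u) \<in> G" "w \<in> UT Y U f N (f y u)"
  shows "case_nat u w \<in> UT Y U f (Suc N) y"
  unfolding UT_def
proof (intro CollectI allI impI)
  fix t assume "t < Suc N"
  with assms show "case_nat u w t \<in> adm Y U f (traj f y (case_nat u w) t)"
    by (cases t) (auto simp: UT_def graphG_def traj_case_nat_Suc simp del: traj.simps(2))
qed

lemma Uinf_case_nat:
  assumes "(y, u) \<in> G" "w \<in> Uinf Y U f (f y u)"
  shows "case_nat u w \<in> Uinf Y U f y"
  unfolding Uinf_def
proof (intro CollectI allI)
  fix t
  from assms show "case_nat u w t \<in> adm Y U f (traj f y (case_nat u w) t)"
    by (cases t) (auto simp: Uinf_def graphG_def traj_case_nat_Suc simp del: traj.simps(2))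
qed

lemma Uinf_nonempty: "y \<in> Y \<Longrightarrow> Uinf Y U f y \<noteq> {}"
proof -
  assume y: "y \<in> Y"
  define sel where "sel z = (SOME u. u \<in> adm Y U f z)" for z
  have sel: "z \<in> Y \<Longrightarrow> (z, sel z) \<in> G" for z
    using adm_nonempty someI_ex[of "\<lambda>u. u \<in> adm Y U f z"] unfolding sel_def graphG_def by auto
  define x where "x = rec_nat y (\<lambda>_ z. f z (sel z))"
  have "x t \<in> Y" for t
    by (induction t) (auto simp: x_def y sel[unfolded mem_G])
  moreover have "traj f y (\<lambda>t. sel (x t)) t = x t" for t
    by (induction t) (auto simp: x_def)
  ultimately have "(\<lambda>t. sel (x t)) \<in> Uinf Y U f y"
    using sel y by (simp add: Uinf_iff)
  then show ?thesis by blast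
qed

lemma UT_nonempty: "y \<in> Y \<Longrightarrow> UT Y U f N y \<noteq> {}"
  using Uinf_nonempty Uinf_iff_UT by blast

lemma G_nonempty: "G \<noteq> {}"
proof -
  obtain y where "y \<in> Y" using Y_nonempty by blast
  moreover obtain u where "u \<in> Uinf Y U f y" using Uinf_nonempty[OF \<open>y \<in> Y\<close>] by blast
  ultimately have "(traj f y u 0, u 0) \<in> G" by (simp only: Uinf_iff)
  then show ?thesis by blast
qed

definition nondecreasing_along_G :: "('a \<Rightarrow> real) \<Rightarrow> bool" where
  "nondecreasing_along_G F \<longleftrightarrow> (\<forall>(y, u) \<in> G. F y \<le> F (f y u))"

lemma nondecreasing_along_traj:
  assumes "nondecreasing_along_G F" "y \<in> Y" "u \<in> UT Y U f N y" "t \<le> N"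
  shows "F y \<le> F (traj f y u t)"
  using assms(4)
proof (induction t)
  case (Suc t)
  then have "(traj f y u t, u t) \<in> G" using UT_iff assms(2,3) by simp
  with Suc assms(1) show ?case unfolding nondecreasing_along_G_def by fastforce
qed simp

definition average_costs_above :: "('a \<Rightarrow> real) \<Rightarrow> bool" where
  "average_costs_above F \<longleftrightarrow> (\<forall>z\<in>Y. \<forall>e>0. \<exists>N>0. \<forall>u \<in> UT Y U f N z.
      real N * (F z - e) \<le> (\<Sum>t<N. k (traj f z u t) (u t)))"

definition pseudo_traj :: "nat \<Rightarrow> (nat \<Rightarrow> 'a) \<Rightarrow> (nat \<Rightarrow> 'u) \<Rightarrow> real \<Rightarrow> bool" where
  "pseudo_traj N x v d \<longleftrightarrow> (\<forall>t<N. (x t, v t) \<in> G) \<and>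
      (\<forall>t. Suc t < N \<longrightarrow> dist (x (Suc t)) (f (x t) (v t)) \<le> d)"

lemma limit_of_processes:
  assumes "\<And>j t. s j t \<in> G"
  obtains r q where "strict_mono r" "\<And>t. (\<lambda>j. s (r j) t) \<longlonglongrightarrow> q t" "\<And>t. q t \<in> G"
    "\<And>t. (\<lambda>j. dist (fst (s j (Suc t))) (f (fst (s j t)) (snd (s j t)))) \<longlonglongrightarrow> 0 \<Longrightarrow>
      fst (q (Suc t)) = f (fst (q t)) (snd (q t))"
proof -
  obtain r q where r: "strict_mono r" and q: "\<And>t. (\<lambda>j. s (r j) t) \<longlonglongrightarrow> q t" "\<And>t. q t \<in> G"
    using compact_diagonal_subseq[of G s, OF compact_G assms] by blast
  have "fst (q (Suc t)) = f (fst (q t)) (snd (q t))"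
    if jumps: "(\<lambda>j. dist (fst (s j (Suc t))) (f (fst (s j t)) (snd (s j t)))) \<longlonglongrightarrow> 0" for t
  proof -
    have "(\<lambda>j. dist (fst (s (r j) (Suc t))) (f (fst (s (r j) t)) (snd (s (r j) t))))
        \<longlonglongrightarrow> dist (fst (q (Suc t))) (f (fst (q t)) (snd (q t)))"
      using tendsto_fst[OF q(1)] tendsto_f_k_G(1)[OF q(1) q(2) assms] by (intro tendsto_dist)
    moreover have "(\<lambda>j. dist (fst (s (r j) (Suc t))) (f (fst (s (r j) t)) (snd (s (r j) t)))) \<longlonglongrightarrow> 0"
      using LIMSEQ_subseq_LIMSEQ[OF jumps r] by (simp add: o_def)
    ultimately have "dist (fst (q (Suc t))) (f (fst (q t)) (snd (q t))) = 0"
      by (rule LIMSEQ_unique)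
    then show ?thesis by simp
  qed
  with r q show thesis by (rule that)
qed

lemma pseudo_traj_mono: "pseudo_traj N x v d \<Longrightarrow> d \<le> d' \<Longrightarrow> pseudo_traj N x v d'"
  unfolding pseudo_traj_def by force

lemma limit_of_pseudo_trajs:
  assumes pseudo: "\<And>j. pseudo_traj N (X j) (V j) (d j)" and "d \<longlonglongrightarrow> 0"
    and start: "(\<lambda>j. X j 0) \<longlonglongrightarrow> z" and "z \<in> Y" and "0 < N"
    and cost: "\<And>j. (\<Sum>t<N. k (X j t) (V j t)) \<le> c"
  obtains u where "u \<in> UT Y U f N z" "(\<Sum>t<N. k (traj f z u t) (u t)) \<le> c"
proof -
  obtain p0 where p0: "p0 \<in> G" using G_nonempty by blast
  define s where "s j t = (if t < N then (X j t, V j t) else p0)" for j t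
  have sG: "s j t \<in> G" for j t
    using pseudo[of j] p0 unfolding s_def pseudo_traj_def by auto
  obtain r q where r: "strict_mono r" and q: "\<And>t. (\<lambda>j. s (r j) t) \<longlonglongrightarrow> q t" "\<And>t. q t \<in> G"
    and q_step: "\<And>t. (\<lambda>j. dist (fst (s j (Suc t))) (f (fst (s j t)) (snd (s j t)))) \<longlonglongrightarrow> 0 \<Longrightarrow>
      fst (q (Suc t)) = f (fst (q t)) (snd (q t))"
    using limit_of_processes[of s] sG by blast
  have "fst (q 0) = z"
    using LIMSEQ_unique[OF tendsto_fst[OF q(1)[of 0]]] LIMSEQ_subseq_LIMSEQ[OF start r]
    by (simp add: s_def o_def \<open>0 < N\<close>)
  moreover have "fst (q (Suc t)) = f (fst (q t)) (snd (q t))" if "Suc t < N" for t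
  proof (rule q_step, rule Lim_null_comparison[OF _ \<open>d \<longlonglongrightarrow> 0\<close>])
    show "\<forall>\<^sub>F j in sequentially. norm (dist (fst (s j (Suc t))) (f (fst (s j t)) (snd (s j t)))) \<le> d j"
      using pseudo that unfolding s_def pseudo_traj_def by simp
  qed
  ultimately have traj: "traj f z (\<lambda>t. snd (q t)) t = fst (q t)" if "t < N" for t
    using traj_eqI[of N "\<lambda>t. fst (q t)" f "\<lambda>t. snd (q t)" t] that by simp
  then have "(\<lambda>t. snd (q t)) \<in> UT Y U f N z"
    using q(2) \<open>z \<in> Y\<close> by (simp add: UT_iff)
  moreover have "(\<Sum>t<N. k (traj f z (\<lambda>t. snd (q t)) t) (snd (q t))) \<le> c"
  proof (rule LIMSEQ_le_const2)
    show "(\<lambda>j. \<Sum>t<N. k (fst (s (r j) t)) (snd (s (r j) t)))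
        \<longlonglongrightarrow> (\<Sum>t<N. k (traj f z (\<lambda>t. snd (q t)) t) (snd (q t)))"
      using tendsto_f_k_G(2)[OF q(1) q(2) sG] traj by (intro tendsto_sum) simp
    show "\<exists>N'. \<forall>j\<ge>N'. (\<Sum>t<N. k (fst (s (r j) t)) (snd (s (r j) t))) \<le> c"
      using cost by (simp add: s_def)
  qed
  ultimately show thesis by (rule that)
qed

lemma robust_average_bound:
  assumes bound: "average_costs_above F" and "e > 0" and z: "z \<in> Y"
  shows "\<exists>N \<rho>. 0 < N \<and> \<rho> > 0 \<and> (\<forall>x v. dist (x 0) z < \<rho> \<and> pseudo_traj N x v \<rho> \<longrightarrow>
           real N * (F z - e) \<le> (\<Sum>t<N. k (x t) (v t)))"
proof -
  obtain N where "0 < N" and N: "\<And>u. u \<in> UT Y U f N z \<Longrightarrow>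
      real N * (F z - e/2) \<le> (\<Sum>t<N. k (traj f z u t) (u t))"
    using bound z \<open>e > 0\<close> unfolding average_costs_above_def by (meson half_gt_zero)
  show ?thesis
  proof (rule ccontr)
    let ?bad = "\<lambda>\<rho> x v. dist (x 0) z < \<rho> \<and> pseudo_traj N x v \<rho> \<and>
      (\<Sum>t<N. k (x t) (v t)) < real N * (F z - e)"
    assume contra: "\<not> ?thesis"
    have "\<exists>x v. ?bad \<rho> x v" if "\<rho> > 0" for \<rho>
    proof -
      have "\<not> (\<forall>x v. dist (x 0) z < \<rho> \<and> pseudo_traj N x v \<rho> \<longrightarrow>
          real N * (F z - e) \<le> (\<Sum>t<N. k (x t) (v t)))"
        using contra \<open>0 < N\<close> that by blast
      then show ?thesis by (auto simp: not_le)
    qed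
    then have "\<forall>j. \<exists>x v. ?bad (inverse (real (Suc j))) x v" by simp
    then obtain X where "\<forall>j. \<exists>v. ?bad (inverse (real (Suc j))) (X j) v"
      by (rule choice[THEN exE])
    then obtain V where XV: "\<forall>j. ?bad (inverse (real (Suc j))) (X j) (V j)"
      by (rule choice[THEN exE])
    have "(\<lambda>j. dist (X j 0) z) \<longlonglongrightarrow> 0"
    proof (rule Lim_null_comparison)
      show "\<forall>\<^sub>F j in sequentially. norm (dist (X j 0) z) \<le> inverse (real (Suc j))"
        using XV by (simp add: less_imp_le)
    qed (rule LIMSEQ_inverse_real_of_nat)
    then have start: "(\<lambda>j. X j 0) \<longlonglongrightarrow> z" by (rule tendsto_dist_iff[THEN iffD2])
    have pseudo: "pseudo_traj N (X j) (V j) (inverse (real (Suc j)))" for j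
      using XV by blast
    have cost: "(\<Sum>t<N. k (X j t) (V j t)) \<le> real N * (F z - e)" for j
      using XV less_imp_le by blast
    obtain u where "u \<in> UT Y U f N z" "(\<Sum>t<N. k (traj f z u t) (u t)) \<le> real N * (F z - e)"
      by (rule limit_of_pseudo_trajs[OF pseudo LIMSEQ_inverse_real_of_nat start z \<open>0 < N\<close> cost])
    moreover have "real N * (F z - e) < real N * (F z - e/2)"
      using \<open>0 < N\<close> \<open>e > 0\<close> by simp
    ultimately show False using N[of u] by linarith
  qed
qed

lemma robust_average_bound_near:
  assumes "continuous_on Y F" and bound: "average_costs_above F" and "e > 0" and z: "z \<in> Y"
  shows "\<exists>N r. 0 < N \<and> r > 0 \<and> (\<forall>z'\<in>Y. dist z' z < r \<longrightarrow> F z' - 2 * e \<le> F z - e) \<and>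
    (\<forall>x v. dist (x 0) z < r \<and> pseudo_traj N x v r \<longrightarrow> real N * (F z - e) \<le> (\<Sum>t<N. k (x t) (v t)))"
proof -
  obtain N \<rho> where "0 < N" "\<rho> > 0" and N: "\<And>x v. dist (x 0) z < \<rho> \<Longrightarrow> pseudo_traj N x v \<rho> \<Longrightarrow>
      real N * (F z - e) \<le> (\<Sum>t<N. k (x t) (v t))"
    using robust_average_bound[OF bound \<open>e > 0\<close> z] by blast
  obtain \<sigma> where "\<sigma> > 0" and \<sigma>: "\<And>z'. z' \<in> Y \<Longrightarrow> dist z' z < \<sigma> \<Longrightarrow> dist (F z') (F z) < e"
    using \<open>continuous_on Y F\<close> z \<open>e > 0\<close> unfolding continuous_on_iff by blast
  have "F z' - 2 * e \<le> F z - e" if "z' \<in> Y" "dist z' z < min \<rho> \<sigma>" for z'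
    using \<sigma>[OF that(1)] that(2) by (simp add: dist_real_def abs_less_iff)
  moreover have "pseudo_traj N x v \<rho>" if "pseudo_traj N x v (min \<rho> \<sigma>)" for x v
    using pseudo_traj_mono[OF that] by simp
  ultimately show ?thesis
    using \<open>0 < N\<close> \<open>\<rho> > 0\<close> \<open>\<sigma> > 0\<close> N by (intro exI[of _ N] exI[of _ "min \<rho> \<sigma>"]) simp
qed

lemma uniform_robust_average_bound:
  assumes "continuous_on Y F" and bound: "average_costs_above F" and "e > 0"
  obtains \<delta> Nmax where "\<delta> > 0"
    "\<And>z. z \<in> Y \<Longrightarrow> \<exists>N. 0 < N \<and> N \<le> Nmax \<and> (\<forall>x v. x 0 = z \<and> pseudo_traj N x v \<delta> \<longrightarrow>
        real N * (F z - 2 * e) \<le> (\<Sum>t<N. k (x t) (v t)))"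
proof -
  let ?P = "\<lambda>z N r. 0 < N \<and> r > 0 \<and> (\<forall>z'\<in>Y. dist z' z < r \<longrightarrow> F z' - 2 * e \<le> F z - e) \<and>
      (\<forall>x v. dist (x 0) z < r \<and> pseudo_traj N x v r \<longrightarrow> real N * (F z - e) \<le> (\<Sum>t<N. k (x t) (v t)))"
  have "\<forall>z\<in>Y. \<exists>N r. ?P z N r" using robust_average_bound_near[OF assms] by blast
  then obtain Nf where "\<forall>z\<in>Y. \<exists>r. ?P z (Nf z) r" by (rule bchoice[THEN exE])
  then obtain rf where P: "\<forall>z\<in>Y. ?P z (Nf z) (rf z)" by (rule bchoice[THEN exE])
  then have Nf_pos: "\<And>z. z \<in> Y \<Longrightarrow> 0 < Nf z" and rf_pos: "\<And>z. z \<in> Y \<Longrightarrow> rf z > 0"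
    and rf_F: "\<And>z z'. z \<in> Y \<Longrightarrow> z' \<in> Y \<Longrightarrow> dist z' z < rf z \<Longrightarrow> F z' - 2 * e \<le> F z - e"
    and rf_bound: "\<And>z x v. z \<in> Y \<Longrightarrow> dist (x 0) z < rf z \<Longrightarrow> pseudo_traj (Nf z) x v (rf z) \<Longrightarrow>
        real (Nf z) * (F z - e) \<le> (\<Sum>t<Nf z. k (x t) (v t))"
    by blast+
  obtain T where T: "T \<subseteq> Y" "finite T" "Y \<subseteq> (\<Union>z\<in>T. ball z (rf z))"
    using compactE_image[OF compact_Y, of Y "\<lambda>z. ball z (rf z)"] rf_pos by force
  then have "T \<noteq> {}" using Y_nonempty by auto
  define \<delta> where "\<delta> = Min (rf ` T)"
  have "\<delta> > 0" using T \<open>T \<noteq> {}\<close> rf_pos unfolding \<delta>_def by (subst Min_gr_iff) auto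
  moreover have "\<exists>N. 0 < N \<and> N \<le> Max (Nf ` T) \<and> (\<forall>x v. x 0 = z' \<and> pseudo_traj N x v \<delta> \<longrightarrow>
      real N * (F z' - 2 * e) \<le> (\<Sum>t<N. k (x t) (v t)))" if "z' \<in> Y" for z'
  proof -
    obtain z where z: "z \<in> T" "dist z z' < rf z" using T(3) \<open>z' \<in> Y\<close> by auto
    have "real (Nf z) * (F z' - 2 * e) \<le> (\<Sum>t<Nf z. k (x t) (v t))"
      if "x 0 = z'" "pseudo_traj (Nf z) x v \<delta>" for x v
    proof -
      have "pseudo_traj (Nf z) x v (rf z)"
        using pseudo_traj_mono[OF that(2)] T z unfolding \<delta>_def by simp
      then have "real (Nf z) * (F z - e) \<le> (\<Sum>t<Nf z. k (x t) (v t))"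
        using rf_bound[of z x v] T z that(1) by (auto simp: dist_commute)
      moreover have "F z' - 2 * e \<le> F z - e"
        using rf_F[of z z'] T z \<open>z' \<in> Y\<close> by (auto simp: dist_commute)
      ultimately show ?thesis by (meson mult_left_mono of_nat_0_le_iff order_trans)
    qed
    moreover have "0 < Nf z" "Nf z \<le> Max (Nf ` T)" using Nf_pos T z by auto
    ultimately show ?thesis by blast
  qed
  ultimately show thesis by (rule that)
qed

lemma short_chain_cost_lower_bound:
  assumes "L \<ge> 0" and "Kg \<ge> 0" and g_lower: "\<And>y u. (y, u) \<in> G \<Longrightarrow> - Kg \<le> g y u"
    and "m \<le> Nmax" and "\<forall>t<m. (x t, v t) \<in> G"
  shows "- (real Nmax * Kg) \<le> chain_cost f g L m x v"
proof -
  have "- (real Nmax * Kg) \<le> - (real m * Kg)" using assms(2,4) by (simp add: mult_right_mono)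
  also have "\<dots> = (\<Sum>t<m. - Kg)" by simp
  also have "\<dots> \<le> (\<Sum>t<m. g (x t) (v t))"
    using assms(5) by (intro sum_mono g_lower) simp
  finally show ?thesis using sum_le_chain_cost[OF \<open>L \<ge> 0\<close>] by (rule order_trans)
qed

text \<open>A chain is cut either at the first jump longer than \<open>\<delta>\<close> inside its first block, which pays
  at least \<open>L \<delta> = Nmax Kg\<close>, the most a piece of length at most \<open>Nmax\<close> can lose, or after a complete
  block, whose cost is nonnegative.\<close>
lemma chain_cost_lower_bound:
  assumes "\<delta> > 0" and "Kg \<ge> 0" and g_lower: "\<And>y u. (y, u) \<in> G \<Longrightarrow> - Kg \<le> g y u"
    and blocks: "\<And>z. z \<in> Y \<Longrightarrow> \<exists>N. 0 < N \<and> N \<le> Nmax \<and>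
      (\<forall>x v. x 0 = z \<and> pseudo_traj N x v \<delta> \<longrightarrow> 0 \<le> (\<Sum>t<N. g (x t) (v t)))"
    and "\<forall>t<n. (x t, v t) \<in> G"
  shows "- (real Nmax * Kg) \<le> chain_cost f g (real Nmax * Kg / \<delta>) n x v"
  using assms(5)
proof (induction n arbitrary: x v rule: less_induct)
  case (less n)
  define C where "C = real Nmax * Kg"
  define L where "L = C / \<delta>"
  have "L \<ge> 0" "L * \<delta> = C" using \<open>\<delta> > 0\<close> \<open>Kg \<ge> 0\<close> by (simp_all add: L_def C_def)
  have short: "- C \<le> chain_cost f g L m x v" if "m \<le> Nmax" "\<forall>t<m. (x t, v t) \<in> G" for m
    using short_chain_cost_lower_bound[OF \<open>L \<ge> 0\<close> \<open>Kg \<ge> 0\<close> g_lower that] by (simp add: C_def)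
  show ?case
  proof (cases "n = 0")
    case True
    then show ?thesis using short[of 0] by (simp add: C_def L_def)
  next
    case False
    then have "(x 0, v 0) \<in> G" using less.prems by simp
    then obtain N where N: "0 < N" "N \<le> Nmax" and block: "\<forall>x' v'. x' 0 = x 0 \<and>
        pseudo_traj N x' v' \<delta> \<longrightarrow> 0 \<le> (\<Sum>t<N. g (x' t) (v' t))"
      using blocks[of "x 0"] by (auto simp: mem_G)
    consider "n \<le> N" | j where "N < n" "Suc j < N" "\<delta> < dist (x (Suc j)) (f (x j) (v j))"
      | "N < n" "pseudo_traj N x v \<delta>"
    proof (cases "n \<le> N")
      case False
      then have "\<forall>t<N. (x t, v t) \<in> G" using less.prems by simp
      then show thesis using that False unfolding pseudo_traj_def by (meson not_le)
    qed
    then show ?thesis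
    proof cases
      case 1
      then show ?thesis using short N less.prems by (simp add: C_def L_def)
    next
      case (2 j)
      have "- C \<le> chain_cost f g L (Suc j) x v" using short 2 N less.prems by simp
      moreover have "C \<le> L * dist (x (Suc j)) (f (x j) (v j))"
        using mult_left_mono[OF less_imp_le[OF 2(3)] \<open>L \<ge> 0\<close>] \<open>L * \<delta> = C\<close> by simp
      moreover have "- C \<le> chain_cost f g L (n - Suc j) (\<lambda>t. x (Suc j + t)) (\<lambda>t. v (Suc j + t))"
        using less.IH[of "n - Suc j"] less.prems 2 by (simp add: C_def L_def)
      ultimately show ?thesis
        using chain_cost_split[of "Suc j" n f g L x v] 2 by (simp add: C_def L_def)
    next
      case 3
      have "0 \<le> (\<Sum>t<N. g (x t) (v t))" using block 3(2) by blast
      then have "0 \<le> chain_cost f g L N x v"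
        using sum_le_chain_cost[OF \<open>L \<ge> 0\<close>] by (rule order_trans)
      moreover have "- C \<le> chain_cost f g L (n - N) (\<lambda>t. x (N + t)) (\<lambda>t. v (N + t))"
        using less.IH[of "n - N"] less.prems 3 N by (simp add: C_def L_def)
      moreover have "0 \<le> L * dist (x N) (f (x (N - 1)) (v (N - 1)))" using \<open>L \<ge> 0\<close> by simp
      ultimately have "- C \<le> chain_cost f g L n x v"
        using chain_cost_split[of N n f g L x v] 3 N by linarith
      then show ?thesis by (simp add: C_def L_def)
    qed
  qed
qed

text \<open>\<open>\<eta> y\<close> is the least cost of a chain entered from \<open>y\<close> by a jump; the cost \<open>L\<close> of that jump
  makes \<open>\<eta>\<close> Lipschitz.\<close>
lemma chain_cost_potential:
  assumes "L \<ge> 0" and lower: "\<And>n x v. \<forall>t<n. (x t, v t) \<in> G \<Longrightarrow> - C \<le> chain_cost f g L n x v"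
  obtains \<eta> where "continuous_on Y \<eta>" "\<And>y u. (y, u) \<in> G \<Longrightarrow> \<eta> y \<le> g y u + \<eta> (f y u)"
proof -
  define chains :: "(nat \<times> (nat \<Rightarrow> 'a) \<times> (nat \<Rightarrow> 'u)) set"
    where "chains = {(n, x, v). \<forall>t<n. (x t, v t) \<in> G}"
  define cost :: "nat \<times> (nat \<Rightarrow> 'a) \<times> (nat \<Rightarrow> 'u) \<Rightarrow> real"
    where "cost c = (case c of (n, x, v) \<Rightarrow> chain_cost f g L n x v)" for c
  define start :: "nat \<times> (nat \<Rightarrow> 'a) \<times> (nat \<Rightarrow> 'u) \<Rightarrow> 'a"
    where "start c = (case c of (n, x, v) \<Rightarrow> x 0)" for c
  define \<eta> where "\<eta> y = (INF c\<in>chains. L * dist y (start c) + cost c)" for y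
  have "(0, x, v) \<in> chains" for x v by (simp add: chains_def)
  then have chains_ne: "chains \<noteq> {}" by blast
  have cost_lower: "- C \<le> cost c" if "c \<in> chains" for c
    using that lower by (auto simp: chains_def cost_def)
  have "L-lipschitz_on Y \<eta>"
    unfolding \<eta>_def using chains_ne \<open>L \<ge> 0\<close> cost_lower by (rule lipschitz_on_INF_dist)
  then have "continuous_on Y \<eta>" by (rule lipschitz_on_continuous_on)
  moreover have "\<eta> y \<le> g y u + \<eta> (f y u)" if yu: "(y, u) \<in> G" for y u
  proof -
    have bdd: "bdd_below ((\<lambda>c. L * dist y (start c) + cost c) ` chains)"
      using cost_lower \<open>L \<ge> 0\<close> by (intro bdd_belowI2[of _ "- C"]) (simp add: add_increasing)
    have "\<eta> y - g y u \<le> L * dist (f y u) (start c) + cost c" if "c \<in> chains" for c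
    proof -
      obtain n x w where c: "c = (n, x, w)" by (cases c)
      then have "(Suc n, case_nat y x, case_nat u w) \<in> chains"
        using that yu by (auto simp: chains_def less_Suc_eq_0_disj)
      from cINF_lower[OF bdd this] show ?thesis
        using chain_cost_cons_le[OF \<open>L \<ge> 0\<close>, of f g n y x u w]
        by (simp add: \<eta>_def cost_def start_def c)
    qed
    then have "\<eta> y - g y u \<le> \<eta> (f y u)"
      unfolding \<eta>_def[of "f y u"] by (intro cINF_greatest[OF chains_ne])
    then show ?thesis by simp
  qed
  ultimately show thesis by (rule that)
qed

definition feasible :: "'a \<Rightarrow> real \<Rightarrow> ('a \<Rightarrow> real) \<Rightarrow> ('a \<Rightarrow> real) \<Rightarrow> bool" where
  "feasible y0 \<mu> \<psi> \<eta> \<longleftrightarrow> continuous_on Y \<psi> \<and> continuous_on Y \<eta> \<and>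
     (\<forall>(y, u) \<in> G. k y u + \<psi> y0 - \<psi> y + \<eta> (f y u) - \<eta> y - \<mu> \<ge> 0 \<and> \<psi> (f y u) - \<psi> y \<ge> 0)"

lemma dstar_eq_Sup_feasible: "dstar Y U f k y0 = Sup {\<mu>. \<exists>\<psi> \<eta>. feasible y0 \<mu> \<psi> \<eta>}"
  by (simp add: dstar_def feasible_def)

lemma feasible_along_traj:
  assumes fe: "feasible y0 \<mu> \<psi> \<eta>" and "y0 \<in> Y" "u \<in> UT Y U f N y0" "t < N"
  shows "\<mu> + \<eta> (traj f y0 u t) - \<eta> (traj f y0 u (Suc t)) \<le> k (traj f y0 u t) (u t)"
proof -
  have "nondecreasing_along_G \<psi>"
    using fe by (auto simp: feasible_def nondecreasing_along_G_def)
  then have "\<psi> y0 \<le> \<psi> (traj f y0 u t)"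
    using nondecreasing_along_traj assms(2-4) by simp
  moreover have "(traj f y0 u t, u t) \<in> G" using UT_iff assms(2-4) by blast
  ultimately show ?thesis using fe unfolding feasible_def by fastforce
qed

lemma feasible_finite_horizon:
  assumes "feasible y0 \<mu> \<psi> \<eta>" "y0 \<in> Y" "u \<in> UT Y U f N y0"
  shows "real N * \<mu> + \<eta> y0 - \<eta> (traj f y0 u N) \<le> (\<Sum>t<N. k (traj f y0 u t) (u t))"
proof -
  have "(\<Sum>t<N. \<mu> + (\<eta> (traj f y0 u t) - \<eta> (traj f y0 u (Suc t)))) \<le> (\<Sum>t<N. k (traj f y0 u t) (u t))"
    using feasible_along_traj[OF assms] by (intro sum_mono) (simp add: add_diff_eq)
  moreover have "(\<Sum>t<N. \<eta> (traj f y0 u t) - \<eta> (traj f y0 u (Suc t))) = \<eta> y0 - \<eta> (traj f y0 u N)"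
    using sum_lessThan_telescope'[of "\<lambda>t. \<eta> (traj f y0 u t)" N] by (simp del: traj.simps(2))
  ultimately show ?thesis by (simp only: sum.distrib) simp
qed

text \<open>Since \<open>F\<close> is nondecreasing along the dynamics, so is \<open>\<psi> = - M max (F y0 - F) 0\<close>, and \<open>\<psi>\<close>
  charges enough on states where \<open>F\<close> is below \<open>F y0\<close> to make every block of the cost
  \<open>k - \<psi> + \<psi> y0 - \<mu>\<close> nonnegative; \<open>\<eta>\<close> is the chain potential of that cost.\<close>
lemma feasible_approx:
  assumes F_cont: "continuous_on Y F" and mono: "nondecreasing_along_G F"
    and avg: "average_costs_above F" and "y0 \<in> Y" and "e0 > 0"
  shows "\<exists>\<psi> \<eta>. feasible y0 (F y0 - e0) \<psi> \<eta>"
proof -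
  define e where "e = e0 / 3"
  have "e > 0" using \<open>e0 > 0\<close> by (simp add: e_def)
  obtain \<delta> Nmax where "\<delta> > 0" and robust: "\<And>z. z \<in> Y \<Longrightarrow> \<exists>N. 0 < N \<and> N \<le> Nmax \<and>
      (\<forall>x v. x 0 = z \<and> pseudo_traj N x v \<delta> \<longrightarrow> real N * (F z - 2 * e) \<le> (\<Sum>t<N. k (x t) (v t)))"
    using uniform_robust_average_bound[OF F_cont avg \<open>e > 0\<close>] by blast
  obtain K where "K \<ge> 0" and K: "\<And>y u. (y, u) \<in> G \<Longrightarrow> \<bar>k y u\<bar> \<le> K" using k_bounded by blast
  obtain B where "B \<ge> 0" and B: "\<And>y. y \<in> Y \<Longrightarrow> \<bar>F y\<bar> \<le> B"
    using continuous_on_compact_bound[OF compact_Y F_cont] by (metis real_norm_def)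
  define M where "M = 2 * B * real Nmax / e"
  define pen where "pen y = M * max (F y0 - F y) 0" for y
  define g where "g y u = k y u + pen y - (F y0 - e0)" for y u
  have "M \<ge> 0" "M * e = real Nmax * (2 * B)" using \<open>B \<ge> 0\<close> \<open>e > 0\<close> by (simp_all add: M_def)
  then have pen_nonneg: "pen y \<ge> 0" for y by (simp add: pen_def)
  have g_lower: "- (K + B) \<le> g y u" if "(y, u) \<in> G" for y u
    using K[OF that] pen_nonneg[of y] B[OF \<open>y0 \<in> Y\<close>] \<open>e0 > 0\<close> by (simp add: g_def abs_le_iff)
  have blocks: "\<exists>N. 0 < N \<and> N \<le> Nmax \<and>
      (\<forall>x v. x 0 = z \<and> pseudo_traj N x v \<delta> \<longrightarrow> 0 \<le> (\<Sum>t<N. g (x t) (v t)))" if z: "z \<in> Y" for z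
  proof -
    obtain N where N: "0 < N" "N \<le> Nmax" and Nk: "\<forall>x v. x 0 = z \<and> pseudo_traj N x v \<delta> \<longrightarrow>
        real N * (F z - 2 * e) \<le> (\<Sum>t<N. k (x t) (v t))"
      using robust[OF z] by blast
    have "0 \<le> (\<Sum>t<N. g (x t) (v t))" if "x 0 = z" "pseudo_traj N x v \<delta>" for x v
    proof -
      have "real N * (F (x 0) - 2 * e) \<le> (\<Sum>t<N. k (x t) (v t))" "\<bar>F (x 0)\<bar> \<le> B"
        using Nk that B[OF z] by auto
      from penalised_block_nonneg[where F = F and x = x and k = k and v = v, OF N this B[OF \<open>y0 \<in> Y\<close>] \<open>e > 0\<close> \<open>M * e = _\<close> \<open>M \<ge> 0\<close>]
      show ?thesis by (simp add: g_def pen_def e_def)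
    qed
    with N show ?thesis by blast
  qed
  have "0 \<le> real Nmax * (K + B) / \<delta>" using \<open>K \<ge> 0\<close> \<open>B \<ge> 0\<close> \<open>\<delta> > 0\<close> by simp
  then obtain \<eta> where "continuous_on Y \<eta>" and \<eta>: "\<And>y u. (y, u) \<in> G \<Longrightarrow> \<eta> y \<le> g y u + \<eta> (f y u)"
    using chain_cost_potential chain_cost_lower_bound[OF \<open>\<delta> > 0\<close> _ g_lower blocks]
      \<open>K \<ge> 0\<close> \<open>B \<ge> 0\<close> by (metis add_nonneg_nonneg)
  have "continuous_on Y (\<lambda>y. - pen y)"
    unfolding pen_def by (intro continuous_intros F_cont)
  moreover have "pen (f y u) \<le> pen y" if "(y, u) \<in> G" for y u
    using mono that \<open>M \<ge> 0\<close> unfolding nondecreasing_along_G_def pen_def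
    by (fastforce intro: mult_left_mono)
  moreover have "0 \<le> k y u + (- pen y0) - (- pen y) + \<eta> (f y u) - \<eta> y - (F y0 - e0)"
    if "(y, u) \<in> G" for y u
    using \<eta>[OF that] by (simp add: g_def pen_def)
  ultimately have "feasible y0 (F y0 - e0) (\<lambda>y. - pen y) \<eta>"
    using \<open>continuous_on Y \<eta>\<close> by (auto simp: feasible_def)
  then show ?thesis by blast
qed

lemma dstar_eq_if:
  assumes "continuous_on Y F" "nondecreasing_along_G F" "average_costs_above F" "y0 \<in> Y"
    and "\<And>\<mu> \<psi> \<eta>. feasible y0 \<mu> \<psi> \<eta> \<Longrightarrow> \<mu> \<le> F y0"
  shows "F y0 = dstar Y U f k y0"
  unfolding dstar_eq_Sup_feasible
  by (rule cSup_eq_if_approximated[symmetric]) (use assms feasible_approx in auto)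

lemma UT_cost_bdd_below:
  assumes "y \<in> Y"
  shows "bdd_below ((\<lambda>u. \<Sum>t<N. k (traj f y u t) (u t)) ` UT Y U f N y)"
proof -
  obtain K where K: "\<And>y u. (y, u) \<in> G \<Longrightarrow> \<bar>k y u\<bar> \<le> K" using k_bounded by blast
  have "(\<Sum>t<N. - K) \<le> (\<Sum>t<N. k (traj f y u t) (u t))" if "u \<in> UT Y U f N y" for u
  proof (rule sum_mono)
    fix t assume "t \<in> {..<N}"
    then have "(traj f y u t, u t) \<in> G" using that assms by (simp add: UT_iff)
    from K[OF this] show "- K \<le> k (traj f y u t) (u t)" by (simp add: abs_le_iff)
  qed
  then show ?thesis by (intro bdd_belowI2) auto
qed

lemma VT_eq_INF:
  "y \<in> Y \<Longrightarrow> real N * VT Y U f k N y = (INF u \<in> UT Y U f N y. \<Sum>t<N. k (traj f y u t) (u t))"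
  using UT_nonempty[of y N] by (cases "N = 0") (simp_all add: VT_def)

lemma VT_Suc_le:
  assumes yu: "(y, u) \<in> G"
  shows "real (Suc n) * VT Y U f k (Suc n) y \<le> k y u + real n * VT Y U f k n (f y u)"
proof -
  have y: "y \<in> Y" and fy: "f y u \<in> Y" using yu by (auto simp: mem_G)
  have "real (Suc n) * VT Y U f k (Suc n) y - k y u \<le> (\<Sum>t<n. k (traj f (f y u) w t) (w t))"
    if w: "w \<in> UT Y U f n (f y u)" for w
  proof -
    have "real (Suc n) * VT Y U f k (Suc n) y
        \<le> (\<Sum>t<Suc n. k (traj f y (case_nat u w) t) (case_nat u w t))"
      unfolding VT_eq_INF[OF y] by (rule cINF_lower[OF UT_cost_bdd_below[OF y] UT_case_nat[OF yu w]])
    also have "\<dots> = k y u + (\<Sum>t<n. k (traj f (f y u) w t) (w t))"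
      by (simp only: sum.lessThan_Suc_shift traj_case_nat_Suc) simp
    finally show ?thesis by simp
  qed
  then have "real (Suc n) * VT Y U f k (Suc n) y - k y u \<le> real n * VT Y U f k n (f y u)"
    unfolding VT_eq_INF[OF fy] by (intro cINF_greatest[OF UT_nonempty[OF fy]])
  then show ?thesis by simp
qed

lemma VT_limit_nondecreasing:
  assumes lim: "\<forall>y\<in>Y. (\<lambda>T. VT Y U f k T y) \<longlonglongrightarrow> V y"
  shows "nondecreasing_along_G V"
  unfolding nondecreasing_along_G_def
proof (clarify)
  fix y u assume yu: "(y, u) \<in> G"
  then have y: "y \<in> Y" and fy: "f y u \<in> Y" by (auto simp: mem_G)
  have step: "VT Y U f k (Suc n) y \<le> k y u / real (Suc n) + real n / real (Suc n) * VT Y U f k n (f y u)" for n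
  proof -
    have "VT Y U f k (Suc n) y \<le> (k y u + real n * VT Y U f k n (f y u)) / real (Suc n)"
      using VT_Suc_le[OF yu, of n] by (subst pos_le_divide_eq) (auto simp: mult.commute)
    then show ?thesis by (simp add: add_divide_distrib)
  qed
  have "(\<lambda>n. VT Y U f k (Suc n) y) \<longlonglongrightarrow> V y"
    using lim y LIMSEQ_Suc by blast
  moreover have "(\<lambda>n. k y u / real (Suc n) + real n / real (Suc n) * VT Y U f k n (f y u))
      \<longlonglongrightarrow> 0 + 1 * V (f y u)"
    using LIMSEQ_Suc[OF lim_const_over_n[of "k y u"]] LIMSEQ_n_over_Suc_n lim fy
    by (intro tendsto_intros) auto
  ultimately show "V y \<le> V (f y u)"
    using step by (auto intro: LIMSEQ_le)
qed

lemma VT_limit_average_costs_above: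
  assumes lim: "\<forall>y\<in>Y. (\<lambda>T. VT Y U f k T y) \<longlonglongrightarrow> V y"
  shows "average_costs_above V"
  unfolding average_costs_above_def
proof (intro ballI allI impI)
  fix z and e :: real assume z: "z \<in> Y" and "e > 0"
  then have "\<forall>\<^sub>F n in sequentially. dist (VT Y U f k n z) (V z) < e"
    using lim by (intro tendstoD) auto
  then obtain N0 where "\<forall>n\<ge>N0. dist (VT Y U f k n z) (V z) < e"
    unfolding eventually_sequentially by blast
  then have "V z - e \<le> VT Y U f k (Suc N0) z"
    by (auto simp: dist_real_def abs_less_iff dest: spec[of _ "Suc N0"])
  then have "real (Suc N0) * (V z - e) \<le> real (Suc N0) * VT Y U f k (Suc N0) z"
    by (intro mult_left_mono) auto
  also have "\<dots> \<le> (\<Sum>t<Suc N0. k (traj f z u t) (u t))" if "u \<in> UT Y U f (Suc N0) z" for u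
    unfolding VT_eq_INF[OF z] by (rule cINF_lower[OF UT_cost_bdd_below[OF z] that])
  finally show "\<exists>N>0. \<forall>u\<in>UT Y U f N z. real N * (V z - e) \<le> (\<Sum>t<N. k (traj f z u t) (u t))"
    by blast
qed

lemma VT_limit_ge_feasible:
  assumes lim: "\<forall>y\<in>Y. (\<lambda>T. VT Y U f k T y) \<longlonglongrightarrow> V y"
    and fe: "feasible y0 \<mu> \<psi> \<eta>" and y0: "y0 \<in> Y"
  shows "\<mu> \<le> V y0"
proof -
  obtain B where B: "\<And>y. y \<in> Y \<Longrightarrow> \<bar>\<eta> y\<bar> \<le> B"
    using continuous_on_compact_bound[OF compact_Y] fe unfolding feasible_def by (metis real_norm_def)
  have bound: "real N * \<mu> - 2 * B \<le> real N * VT Y U f k N y0" for N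
    unfolding VT_eq_INF[OF y0]
  proof (rule cINF_greatest[OF UT_nonempty[OF y0]])
    fix u assume u: "u \<in> UT Y U f N y0"
    have "traj f y0 u N \<in> Y"
      using u y0 by (cases N) (auto simp: UT_iff mem_G)
    then show "real N * \<mu> - 2 * B \<le> (\<Sum>t<N. k (traj f y0 u t) (u t))"
      using feasible_finite_horizon[OF fe y0 u] B[OF y0] B[of "traj f y0 u N"] by (simp add: abs_le_iff)
  qed
  have approx: "\<mu> - 2 * B / real (Suc n) \<le> VT Y U f k (Suc n) y0" for n
  proof -
    have "(real (Suc n) * \<mu> - 2 * B) / real (Suc n) \<le> VT Y U f k (Suc n) y0"
      using bound[of "Suc n"] by (subst pos_divide_le_eq) (auto simp: mult.commute)
    then show ?thesis by (simp add: diff_divide_distrib)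
  qed
  have "(\<lambda>n. \<mu> - 2 * B / real (Suc n)) \<longlonglongrightarrow> \<mu> - 0"
    using LIMSEQ_Suc[OF lim_const_over_n[of "2 * B"]] by (intro tendsto_intros) simp
  moreover have "(\<lambda>n. VT Y U f k (Suc n) y0) \<longlonglongrightarrow> V y0"
    using lim y0 LIMSEQ_Suc by blast
  ultimately show ?thesis using approx by (auto intro: LIMSEQ_le)
qed

definition disc_cost :: "real \<Rightarrow> 'a \<Rightarrow> (nat \<Rightarrow> 'u) \<Rightarrow> real" where
  "disc_cost \<alpha> y u = (\<Sum>t. \<alpha>^t * k (traj f y u t) (u t))"

lemma h_disc_eq: "h_disc Y U f k \<alpha> y = (1 - \<alpha>) * (INF u \<in> Uinf Y U f y. disc_cost \<alpha> y u)"
  by (simp add: h_disc_def disc_cost_def)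

lemma summable_disc_cost:
  assumes "y \<in> Y" "u \<in> Uinf Y U f y" "0 \<le> \<alpha>" "\<alpha> < 1"
  shows "summable (\<lambda>t. \<alpha>^t * k (traj f y u t) (u t))"
proof -
  obtain K where K: "\<And>y u. (y, u) \<in> G \<Longrightarrow> \<bar>k y u\<bar> \<le> K" using k_bounded by blast
  have "\<bar>k (traj f y u t) (u t)\<bar> \<le> K" for t using assms(1,2) K by (simp add: Uinf_iff)
  from summable_discounted[OF this assms(3,4)] show ?thesis .
qed

lemma disc_cost_bdd_below:
  assumes "y \<in> Y" "0 \<le> \<alpha>" "\<alpha> < 1"
  shows "bdd_below (disc_cost \<alpha> y ` Uinf Y U f y)"
proof -
  obtain K where K: "\<And>y u. (y, u) \<in> G \<Longrightarrow> \<bar>k y u\<bar> \<le> K" using k_bounded by blast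
  have "- (K / (1 - \<alpha>)) \<le> disc_cost \<alpha> y u" if "u \<in> Uinf Y U f y" for u
  proof -
    have "\<bar>k (traj f y u t) (u t)\<bar> \<le> K" for t using assms(1) that K by (simp add: Uinf_iff)
    from abs_suminf_discounted_le[of "\<lambda>t. k (traj f y u t) (u t)" K, OF this assms(2,3)] show ?thesis
      by (simp add: disc_cost_def abs_le_iff)
  qed
  then show ?thesis by (intro bdd_belowI2)
qed

lemma disc_cost_case_nat:
  assumes yu: "(y, u) \<in> G" and w: "w \<in> Uinf Y U f (f y u)" and "0 \<le> \<alpha>" "\<alpha> < 1"
  shows "disc_cost \<alpha> y (case_nat u w) = k y u + \<alpha> * disc_cost \<alpha> (f y u) w"
proof -
  have "y \<in> Y" "f y u \<in> Y" using yu by (auto simp: mem_G)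
  note s = summable_disc_cost[OF \<open>y \<in> Y\<close> Uinf_case_nat[OF yu w] assms(3,4)]
  note sw = summable_disc_cost[OF \<open>f y u \<in> Y\<close> w assms(3,4)]
  show ?thesis
    using suminf_split_head[OF s] suminf_mult[OF sw, of \<alpha>]
    by (simp add: disc_cost_def traj_case_nat_Suc mult.assoc del: traj.simps(2))
qed

lemma h_disc_step:
  assumes yu: "(y, u) \<in> G" and "0 < \<alpha>" "\<alpha> < 1"
  shows "h_disc Y U f k \<alpha> y \<le> (1 - \<alpha>) * k y u + \<alpha> * h_disc Y U f k \<alpha> (f y u)"
proof -
  have y: "y \<in> Y" and fy: "f y u \<in> Y" using yu by (auto simp: mem_G)
  let ?I = "\<lambda>y. INF w \<in> Uinf Y U f y. disc_cost \<alpha> y w"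
  have "(?I y - k y u) / \<alpha> \<le> disc_cost \<alpha> (f y u) w" if w: "w \<in> Uinf Y U f (f y u)" for w
  proof -
    have "?I y \<le> disc_cost \<alpha> y (case_nat u w)"
      using cINF_lower[OF disc_cost_bdd_below[OF y] Uinf_case_nat[OF yu w]] assms(2,3) by simp
    then show ?thesis
      using disc_cost_case_nat[OF yu w] assms(2,3) by (simp add: pos_divide_le_eq mult.commute)
  qed
  then have "(?I y - k y u) / \<alpha> \<le> ?I (f y u)"
    by (intro cINF_greatest[OF Uinf_nonempty[OF fy]])
  then have "?I y \<le> k y u + \<alpha> * ?I (f y u)"
    using assms(2) by (simp add: pos_divide_le_eq mult.commute)
  then have "(1 - \<alpha>) * ?I y \<le> (1 - \<alpha>) * (k y u + \<alpha> * ?I (f y u))"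
    using assms(3) by (intro mult_left_mono) auto
  then show ?thesis unfolding h_disc_eq by (simp add: algebra_simps)
qed

lemma h_limit_nondecreasing:
  assumes lim: "\<forall>y\<in>Y. ((\<lambda>\<alpha>. h_disc Y U f k \<alpha> y) \<longlongrightarrow> h y) (at_left 1)"
  shows "nondecreasing_along_G h"
  unfolding nondecreasing_along_G_def
proof (clarify)
  fix y u assume yu: "(y, u) \<in> G"
  then have "y \<in> Y" "f y u \<in> Y" by (auto simp: mem_G)
  have "((\<lambda>\<alpha>. (1 - \<alpha>) * k y u + \<alpha> * h_disc Y U f k \<alpha> (f y u)) \<longlongrightarrow> (1 - 1) * k y u + 1 * h (f y u))
      (at_left (1::real))"
    using lim \<open>f y u \<in> Y\<close> by (intro tendsto_intros) auto
  moreover have "((\<lambda>\<alpha>. h_disc Y U f k \<alpha> y) \<longlongrightarrow> h y) (at_left 1)"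
    using lim \<open>y \<in> Y\<close> by blast
  moreover have "\<forall>\<^sub>F \<alpha> in at_left (1::real).
      h_disc Y U f k \<alpha> y \<le> (1 - \<alpha>) * k y u + \<alpha> * h_disc Y U f k \<alpha> (f y u)"
    using eventually_at_left_real[OF zero_less_one] by eventually_elim (auto intro: h_disc_step[OF yu])
  ultimately have "h y \<le> (1 - 1) * k y u + 1 * h (f y u)"
    by (rule tendsto_le[OF trivial_limit_at_left_real])
  then show "h y \<le> h (f y u)" by simp
qed

lemma feasible_discounted:
  assumes fe: "feasible y0 \<mu> \<psi> \<eta>" and y0: "y0 \<in> Y" and u: "u \<in> Uinf Y U f y0"
    and B: "\<And>y. y \<in> Y \<Longrightarrow> \<bar>\<eta> y\<bar> \<le> B" and "0 \<le> \<alpha>" "\<alpha> < 1"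
  shows "\<mu> / (1 - \<alpha>) - 2 * B \<le> disc_cost \<alpha> y0 u"
proof -
  let ?x = "traj f y0 u"
  have Bt: "\<bar>\<eta> (?x t)\<bar> \<le> B" for t
    using B u y0 by (simp add: Uinf_iff mem_G)
  have "\<bar>a - b\<bar> \<le> 2 * B" if "\<bar>a\<bar> \<le> B" "\<bar>b\<bar> \<le> B" for a b :: real
    using that by (simp add: abs_le_iff)
  then have "\<bar>\<eta> (?x t) - \<eta> (?x (Suc t))\<bar> \<le> 2 * B" for t
    using Bt by blast
  then have s_tel: "summable (\<lambda>t. \<alpha>^t * (\<eta> (?x t) - \<eta> (?x (Suc t))))"
    by (rule summable_discounted[of "\<lambda>t. \<eta> (?x t) - \<eta> (?x (Suc t))", OF _ assms(5,6)])
  have s_geo: "summable (\<lambda>t. \<mu> * \<alpha>^t)"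
    using assms(5,6) by (intro summable_mult summable_geometric) simp
  have "\<mu> / (1 - \<alpha>) - 2 * B \<le> (\<Sum>t. \<mu> * \<alpha>^t) + (\<Sum>t. \<alpha>^t * (\<eta> (?x t) - \<eta> (?x (Suc t))))"
    using discounted_telescoping_lower_bound[of "\<lambda>t. \<eta> (?x t)", OF Bt assms(5,6)] assms(5,6)
    by (simp add: suminf_mult suminf_geometric)
  also have "\<dots> = (\<Sum>t. \<alpha>^t * (\<mu> + \<eta> (?x t) - \<eta> (?x (Suc t))))"
    by (subst suminf_add[OF s_geo s_tel]) (simp add: algebra_simps)
  also have "\<dots> \<le> disc_cost \<alpha> y0 u"
    unfolding disc_cost_def
  proof (rule suminf_le)
    show "\<alpha>^t * (\<mu> + \<eta> (?x t) - \<eta> (?x (Suc t))) \<le> \<alpha>^t * k (?x t) (u t)" for t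
      using feasible_along_traj[OF fe y0, of u "Suc t" t] u assms(5) Uinf_iff_UT
      by (intro mult_left_mono) auto
    show "summable (\<lambda>t. \<alpha>^t * (\<mu> + \<eta> (?x t) - \<eta> (?x (Suc t))))"
      using summable_add[OF s_geo s_tel] by (simp add: algebra_simps)
  qed (rule summable_disc_cost[OF y0 u assms(5,6)])
  finally show ?thesis .
qed

lemma h_limit_ge_feasible:
  assumes lim: "\<forall>y\<in>Y. ((\<lambda>\<alpha>. h_disc Y U f k \<alpha> y) \<longlongrightarrow> h y) (at_left 1)"
    and fe: "feasible y0 \<mu> \<psi> \<eta>" and y0: "y0 \<in> Y"
  shows "\<mu> \<le> h y0"
proof -
  obtain B where B: "\<And>y. y \<in> Y \<Longrightarrow> \<bar>\<eta> y\<bar> \<le> B"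
    using continuous_on_compact_bound[OF compact_Y] fe unfolding feasible_def by (metis real_norm_def)
  have bound: "\<mu> - 2 * B * (1 - \<alpha>) \<le> h_disc Y U f k \<alpha> y0" if "0 < \<alpha>" "\<alpha> < 1" for \<alpha>
  proof -
    have "\<mu> / (1 - \<alpha>) - 2 * B \<le> (INF u \<in> Uinf Y U f y0. disc_cost \<alpha> y0 u)"
      using feasible_discounted[OF fe y0 _ B] that
      by (intro cINF_greatest[OF Uinf_nonempty[OF y0]]) auto
    then have "(1 - \<alpha>) * (\<mu> / (1 - \<alpha>) - 2 * B) \<le> h_disc Y U f k \<alpha> y0"
      unfolding h_disc_eq using that by (intro mult_left_mono) auto
    moreover have "(1 - \<alpha>) * (\<mu> / (1 - \<alpha>)) = \<mu>" using that by simp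
    ultimately show ?thesis by (simp add: right_diff_distrib mult.commute)
  qed
  have "((\<lambda>\<alpha>. h_disc Y U f k \<alpha> y0) \<longlongrightarrow> h y0) (at_left 1)"
    using lim y0 by blast
  moreover have "((\<lambda>\<alpha>. \<mu> - 2 * B * (1 - \<alpha>)) \<longlongrightarrow> \<mu> - 2 * B * (1 - 1)) (at_left (1::real))"
    by (intro tendsto_intros)
  moreover have "\<forall>\<^sub>F \<alpha> in at_left (1::real). \<mu> - 2 * B * (1 - \<alpha>) \<le> h_disc Y U f k \<alpha> y0"
    using eventually_at_left_real[OF zero_less_one] by eventually_elim (auto intro: bound)
  ultimately have "\<mu> - 2 * B * (1 - 1) \<le> h y0"
    by (rule tendsto_le[OF trivial_limit_at_left_real])
  then show ?thesis by simp
qed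

lemma h_disc_le_if_partial_sums_le:
  assumes y: "y \<in> Y" and u: "u \<in> Uinf Y U f y" and "0 < \<alpha>" "\<alpha> < 1"
    and partial: "\<And>m. (\<Sum>t<m. k (traj f y u t) (u t) - c) \<le> 0"
  shows "h_disc Y U f k \<alpha> y \<le> c"
proof -
  have s: "summable (\<lambda>t. \<alpha>^t * (k (traj f y u t) (u t) - c))"
    using summable_diff[OF summable_disc_cost[OF y u] summable_mult[OF summable_geometric, of \<alpha> c]]
      assms(3,4) by (simp add: algebra_simps)
  have "disc_cost \<alpha> y u = (\<Sum>t. \<alpha>^t * (k (traj f y u t) (u t) - c)) + c / (1 - \<alpha>)"
    using suminf_add[OF s summable_mult[OF summable_geometric, of \<alpha> c]] assms(3,4)
    by (simp add: disc_cost_def suminf_mult suminf_geometric algebra_simps)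
  also have "\<dots> \<le> c / (1 - \<alpha>)"
    using suminf_le_const[OF s sum_discounted_nonpos[where a="\<lambda>t. k (traj f y u t) (u t) - c"]]
      partial assms(3,4) by simp
  finally have "disc_cost \<alpha> y u \<le> c / (1 - \<alpha>)" .
  moreover have "(INF u \<in> Uinf Y U f y. disc_cost \<alpha> y u) \<le> disc_cost \<alpha> y u"
    using disc_cost_bdd_below[OF y less_imp_le assms(4)] assms(3) u by (intro cINF_lower)
  ultimately have "(1 - \<alpha>) * (INF u \<in> Uinf Y U f y. disc_cost \<alpha> y u) \<le> (1 - \<alpha>) * (c / (1 - \<alpha>))"
    using assms(4) by (intro mult_left_mono) auto
  then show ?thesis using assms(4) by (simp add: h_disc_eq)
qed

lemma h_limit_le_if_partial_sums_le:
  assumes lim: "\<forall>y\<in>Y. ((\<lambda>\<alpha>. h_disc Y U f k \<alpha> y) \<longlongrightarrow> h y) (at_left 1)"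
    and "y \<in> Y" and "u \<in> Uinf Y U f y" and partial: "\<And>m. (\<Sum>t<m. k (traj f y u t) (u t) - c) \<le> 0"
  shows "h y \<le> c"
proof (rule tendsto_le[OF trivial_limit_at_left_real tendsto_const])
  show "((\<lambda>\<alpha>. h_disc Y U f k \<alpha> y) \<longlongrightarrow> h y) (at_left 1)" using lim \<open>y \<in> Y\<close> by blast
  show "\<forall>\<^sub>F \<alpha> in at_left 1. h_disc Y U f k \<alpha> y \<le> c"
    using eventually_at_left_real[OF zero_less_one]
    by eventually_elim (auto intro: h_disc_le_if_partial_sums_le[OF assms(2,3) _ _ partial])
qed

text \<open>If some horizon has average cost below \<open>h z - e\<close>, cut its trajectory at a maximiser of the
  partial sums of \<open>k - (h z - e/2)\<close>: the remaining piece is long and all its partial sums are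
  nonpositive.\<close>
lemma segment_with_nonpos_partial_sums:
  assumes mono: "nondecreasing_along_G h" and z: "z \<in> Y" and "e > 0"
    and bad: "\<And>N. 0 < N \<Longrightarrow> \<exists>u\<in>UT Y U f N z. (\<Sum>t<N. k (traj f z u t) (u t)) < real N * (h z - e)"
  shows "\<exists>y w. y \<in> Y \<and> h z \<le> h y \<and> w \<in> UT Y U f j y \<and>
           (\<forall>m\<le>j. (\<Sum>t<m. k (traj f y w t) (w t) - (h z - e/2)) \<le> 0)"
proof -
  obtain K where "K \<ge> 0" and K: "\<And>y u. (y, u) \<in> G \<Longrightarrow> \<bar>k y u\<bar> \<le> K" using k_bounded by blast
  define c where "c = h z - e/2"
  define K2 where "K2 = K + \<bar>c\<bar> + 1"
  have "K2 > 0" using \<open>K \<ge> 0\<close> by (simp add: K2_def add_nonneg_pos)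
  define N where "N = Suc (nat \<lceil>real j * K2 / (e/2)\<rceil>)"
  have "0 < N" by (simp add: N_def)
  have "real j * K2 / (e/2) \<le> real N" unfolding N_def by linarith
  then have NK: "real j * K2 \<le> real N * (e/2)" using \<open>e > 0\<close> by (simp add: pos_divide_le_eq)
  obtain u where u: "u \<in> UT Y U f N z" and u_bad: "(\<Sum>t<N. k (traj f z u t) (u t)) < real N * (h z - e)"
    using bad[OF \<open>0 < N\<close>] by blast
  define a where "a t = k (traj f z u t) (u t) - c" for t
  have a_bound: "\<bar>a t\<bar> \<le> K2" if "t < N" for t
  proof -
    have "\<bar>k (traj f z u t) (u t)\<bar> \<le> K" using K u z that by (simp add: UT_iff)
    then show ?thesis
      using abs_triangle_ineq4[of "k (traj f z u t) (u t)" c] by (simp add: a_def K2_def)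
  qed
  have "(\<Sum>t<N. a t) = (\<Sum>t<N. k (traj f z u t) (u t)) - real N * c"
    by (simp add: a_def sum_subtractf)
  also have "\<dots> \<le> - (real N * (e/2))"
    using u_bad by (simp add: c_def algebra_simps)
  finally have a_total: "(\<Sum>t<N. a t) \<le> - (real N * (e/2))" .
  obtain s where "s < N" and long: "real N * (e/2) \<le> real (N - s) * K2"
    and partial: "\<forall>m. s + m \<le> N \<longrightarrow> (\<Sum>t<m. a (s + t)) \<le> 0"
    using exists_start_of_nonpos_partial_sums[OF \<open>0 < N\<close> a_bound a_total] \<open>e > 0\<close> by auto
  have "real j * K2 \<le> real (N - s) * K2" using NK long by linarith
  then have "j \<le> N - s" using \<open>K2 > 0\<close> by simp
  have "(traj f z u s, u s) \<in> G" using u z \<open>s < N\<close> by (simp add: UT_iff)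
  then have "traj f z u s \<in> Y" by (simp add: mem_G)
  moreover have "h z \<le> h (traj f z u s)"
    using nondecreasing_along_traj[OF mono z u] \<open>s < N\<close> by simp
  moreover have "(\<lambda>t. u (s + t)) \<in> UT Y U f j (traj f z u s)"
    using UT_shift[OF u] \<open>j \<le> N - s\<close> \<open>s < N\<close> by simp
  moreover have "(\<Sum>t<m. k (traj f (traj f z u s) (\<lambda>t. u (s + t)) t) (u (s + t)) - c) \<le> 0" if "m \<le> j" for m
    using partial \<open>j \<le> N - s\<close> \<open>s < N\<close> that by (simp add: a_def traj_shift[symmetric])
  ultimately show ?thesis unfolding c_def by blast
qed

lemma limit_of_segments:
  assumes y: "\<And>j. y j \<in> Y" and w: "\<And>j. w j \<in> UT Y U f j (y j)"
  obtains r y0 v where "strict_mono r" "(\<lambda>j. y (r j)) \<longlonglongrightarrow> y0" "y0 \<in> Y" "v \<in> Uinf Y U f y0"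
    "\<And>t. (\<lambda>j. k (traj f (y (r j)) (w (r j)) t) (w (r j) t)) \<longlonglongrightarrow> k (traj f y0 v t) (v t)"
proof -
  obtain p0 where p0: "p0 \<in> G" using G_nonempty by blast
  define s where "s j t = (if t < j then (traj f (y j) (w j) t, w j t) else p0)" for j t
  have sG: "s j t \<in> G" for j t
    using y w p0 by (simp add: s_def UT_iff)
  obtain r q where r: "strict_mono r" and q: "\<And>t. (\<lambda>j. s (r j) t) \<longlonglongrightarrow> q t" "\<And>t. q t \<in> G"
    and q_step: "\<And>t. (\<lambda>j. dist (fst (s j (Suc t))) (f (fst (s j t)) (snd (s j t)))) \<longlonglongrightarrow> 0 \<Longrightarrow>
      fst (q (Suc t)) = f (fst (q t)) (snd (q t))"
    using limit_of_processes[of s] sG by blast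
  have s_eventually: "\<forall>\<^sub>F j in sequentially. s (r j) t = (traj f (y (r j)) (w (r j)) t, w (r j) t)" for t
    using eventually_ge_at_top[of "Suc t"]
    by eventually_elim (use seq_suble[OF r] in \<open>auto simp: s_def intro: less_le_trans\<close>)
  have "fst (q (Suc t)) = f (fst (q t)) (snd (q t))" for t
  proof (rule q_step, rule tendsto_eventually)
    show "\<forall>\<^sub>F j in sequentially. dist (fst (s j (Suc t))) (f (fst (s j t)) (snd (s j t))) = 0"
      using eventually_gt_at_top[of "Suc t"] by eventually_elim (simp add: s_def)
  qed
  then have traj: "traj f (fst (q 0)) (\<lambda>t. snd (q t)) t = fst (q t)" for t
    using traj_eqI[of "Suc t" "\<lambda>t. fst (q t)" f "\<lambda>t. snd (q t)" t] by simp
  have "fst (q 0) \<in> Y" using q(2)[of 0] by (cases "q 0") (auto simp: mem_G)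
  moreover have "(\<lambda>t. snd (q t)) \<in> Uinf Y U f (fst (q 0))"
    using calculation q(2) traj by (simp add: Uinf_iff)
  moreover have "\<forall>\<^sub>F j in sequentially. fst (s (r j) 0) = y (r j)"
    using s_eventually[of 0] by eventually_elim simp
  then have "(\<lambda>j. y (r j)) \<longlonglongrightarrow> fst (q 0)"
    by (rule Lim_transform_eventually[OF tendsto_fst[OF q(1)]])
  moreover have "(\<lambda>j. k (traj f (y (r j)) (w (r j)) t) (w (r j) t))
      \<longlonglongrightarrow> k (traj f (fst (q 0)) (\<lambda>t. snd (q t)) t) (snd (q t))" for t
  proof -
    have "\<forall>\<^sub>F j in sequentially.
        k (fst (s (r j) t)) (snd (s (r j) t)) = k (traj f (y (r j)) (w (r j)) t) (w (r j) t)"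
      using s_eventually[of t] by eventually_elim simp
    from Lim_transform_eventually[OF tendsto_f_k_G(2)[OF q(1) q(2) sG] this] show ?thesis
      using traj by simp
  qed
  ultimately show thesis using r that by blast
qed

lemma h_limit_average_costs_above:
  assumes lim: "\<forall>y\<in>Y. ((\<lambda>\<alpha>. h_disc Y U f k \<alpha> y) \<longlongrightarrow> h y) (at_left 1)"
    and h_cont: "continuous_on Y h"
  shows "average_costs_above h"
  unfolding average_costs_above_def
proof (intro ballI allI impI, rule ccontr)
  fix z and e :: real
  assume z: "z \<in> Y" and "e > 0"
    and contra: "\<not> (\<exists>N>0. \<forall>u\<in>UT Y U f N z. real N * (h z - e) \<le> (\<Sum>t<N. k (traj f z u t) (u t)))"
  define c where "c = h z - e/2"
  have bad: "\<exists>u\<in>UT Y U f N z. (\<Sum>t<N. k (traj f z u t) (u t)) < real N * (h z - e)" if "0 < N" for N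
    using contra that not_le by blast
  have "\<forall>j. \<exists>y w. y \<in> Y \<and> h z \<le> h y \<and> w \<in> UT Y U f j y \<and>
      (\<forall>m\<le>j. (\<Sum>t<m. k (traj f y w t) (w t) - c) \<le> 0)"
    using segment_with_nonpos_partial_sums[OF h_limit_nondecreasing[OF lim] z \<open>e > 0\<close> bad]
    unfolding c_def by blast
  then obtain y where "\<forall>j. \<exists>w. y j \<in> Y \<and> h z \<le> h (y j) \<and> w \<in> UT Y U f j (y j) \<and>
      (\<forall>m\<le>j. (\<Sum>t<m. k (traj f (y j) w t) (w t) - c) \<le> 0)"
    by (rule choice[THEN exE])
  then obtain w where seg: "\<forall>j. y j \<in> Y \<and> h z \<le> h (y j) \<and> w j \<in> UT Y U f j (y j) \<and>
      (\<forall>m\<le>j. (\<Sum>t<m. k (traj f (y j) (w j) t) (w j t) - c) \<le> 0)"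
    by (rule choice[THEN exE])
  obtain r y0 v where r: "strict_mono r" and y0: "(\<lambda>j. y (r j)) \<longlonglongrightarrow> y0" "y0 \<in> Y"
    and v: "v \<in> Uinf Y U f y0"
    and k_lim: "\<And>t. (\<lambda>j. k (traj f (y (r j)) (w (r j)) t) (w (r j) t)) \<longlonglongrightarrow> k (traj f y0 v t) (v t)"
  proof -
    have "\<And>j. y j \<in> Y" "\<And>j. w j \<in> UT Y U f j (y j)" using seg by blast+
    then show thesis using limit_of_segments that by blast
  qed
  have "(\<lambda>j. h (y (r j))) \<longlonglongrightarrow> h y0"
    using continuous_on_tendsto_compose[OF h_cont y0] seg by simp
  then have "h z \<le> h y0"
    using seg by (intro LIMSEQ_le_const) auto
  moreover have "(\<Sum>t<m. k (traj f y0 v t) (v t) - c) \<le> 0" for m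
  proof (rule LIMSEQ_le_const2)
    show "(\<lambda>j. \<Sum>t<m. k (traj f (y (r j)) (w (r j)) t) (w (r j) t) - c)
        \<longlonglongrightarrow> (\<Sum>t<m. k (traj f y0 v t) (v t) - c)"
      by (intro tendsto_intros k_lim)
    show "\<exists>N. \<forall>j\<ge>N. (\<Sum>t<m. k (traj f (y (r j)) (w (r j)) t) (w (r j) t) - c) \<le> 0"
    proof (intro exI allI impI)
      fix j assume "m \<le> j"
      then have "m \<le> r j" using seq_suble[OF r, of j] by simp
      then show "(\<Sum>t<m. k (traj f (y (r j)) (w (r j)) t) (w (r j) t) - c) \<le> 0" using seg by blast
    qed
  qed
  then have "h y0 \<le> c" by (rule h_limit_le_if_partial_sums_le[OF lim y0(2) v])
  ultimately show False using \<open>e > 0\<close> by (simp add: c_def)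
qed

lemma dstar_eq_VT_limit:
  assumes "\<forall>y\<in>Y. (\<lambda>T. VT Y U f k T y) \<longlonglongrightarrow> V y" and "continuous_on Y V" and "y0 \<in> Y"
  shows "V y0 = dstar Y U f k y0"
  using assms VT_limit_nondecreasing VT_limit_average_costs_above VT_limit_ge_feasible
  by (intro dstar_eq_if) blast+

lemma dstar_eq_h_disc_limit:
  assumes "\<forall>y\<in>Y. ((\<lambda>\<alpha>. h_disc Y U f k \<alpha> y) \<longlongrightarrow> h y) (at_left 1)" and "continuous_on Y h"
    and "y0 \<in> Y"
  shows "h y0 = dstar Y U f k y0"
  using assms h_limit_nondecreasing h_limit_average_costs_above h_limit_ge_feasible
  by (intro dstar_eq_if) blast+

end

theorem theorem4p2:
  fixes Y :: "'a::euclidean_space set"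
    and U0 :: "'u::metric_space set"
    and U :: "'a \<Rightarrow> 'u set"
    and f :: "'a \<Rightarrow> 'u \<Rightarrow> 'a"
    and k :: "'a \<Rightarrow> 'u \<Rightarrow> real"
  assumes "Y \<noteq> {}" and "compact Y"
    and "compact U0"
    and "\<forall>y\<in>Y. U y \<subseteq> U0 \<and> compact (U y)"
    and "usc_on Y U"
    and "continuous_on (UNIV \<times> U0) (\<lambda>(y, u). f y u)"
    and "continuous_on (UNIV \<times> U0) (\<lambda>(y, u). k y u)"
    and "\<forall>y\<in>Y. adm Y U f y \<noteq> {}"
  shows "(\<forall>V. (\<forall>y0\<in>Y. (\<lambda>T. VT Y U f k T y0) \<longlonglongrightarrow> V y0) \<and> continuous_on Y V
            \<longrightarrow> (\<forall>y0\<in>Y. V y0 = dstar Y U f k y0)) \<and>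
         (\<forall>h. (\<forall>y0\<in>Y. ((\<lambda>\<alpha>. h_disc Y U f k \<alpha> y0) \<longlongrightarrow> h y0) (at_left 1)) \<and> continuous_on Y h
            \<longrightarrow> (\<forall>y0\<in>Y. h y0 = dstar Y U f k y0))"
proof -
  interpret control_system Y U0 U f k using assms by unfold_locales
  show ?thesis using dstar_eq_VT_limit dstar_eq_h_disc_limit by blast
qed

end
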